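(* Let $G$ be an open subgroup either of $\mathrm{GL}_2(\mathbb{Z}_\ell)$ or of the normalizer of a Cartan subgroup of $\mathrm{GL}_2(\mathbb{Z}_\ell)$. For all integers $a,b\geq0$ the set $\mathcal{M}_{a,b}$ is measurable in $G$ and $\mu_{a,b}=\mu_{a,b}(n)$ for every $n>a+b$; in particular $\mu_{a,b}=0$ if and only if $\mathcal{M}_{a,b}=\emptyset$. Moreover the set $\bigcup_{a,b\in\mathbb{N}}\mathcal{M}_{a,b}$ is measurable in $G$ and its complement in $G$ has Haar measure zero.
   Context: Let $\ell$ be a prime. A Cartan subgroup of $\mathrm{GL}_2(\mathbb{Z}_\ell)$ is the unit group $R^\times$ of a quadratic ring $R$ over $\mathbb{Z}_\ell$ (a subring of a reduced degree-2 $\mathbb{Q}_\ell$-algebra $F$ that is a finitely generated $\mathbb{Z}_\ell$-module with $\mathbb{Q}_\ell R=F$), embedded via its left-multiplication action on $R$ in a $\mathbb{Z}_\ell$-basis. Identify each $M\in\mathrm{GL}_2(\mathbb{Z}_\ell)$ with an automorphism of $\varinjlim_n(\mathbb{Z}/\ell^n\mathbb{Z})^2$. For $X\subseteq\mathrm{GL}_2(\mathbb{Z}_\ell)$, $X(n)$ denotes the image of $X$ in $\mathrm{GL}_2(\mathbb{Z}/\ell^n\mathbb{Z})$. For a subgroup $G$ and integers $a,b\geq0$ let $\mathcal{M}_{a,b}=\{M\in G:\ \ker(M-I)\cong\mathbb{Z}/\ell^a\mathbb{Z}\times\mathbb{Z}/\ell^{a+b}\mathbb{Z}\}$ (kernel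 on $\varinjlim_n(\mathbb{Z}/\ell^n\mathbb{Z})^2$), $\mathcal{M}_{a,b}(n)$ its image in $G(n)$, $\mu_{a,b}$ its measure for the Haar measure of $G$ normalized to total mass $1$, and $\mu_{a,b}(n)=\#\mathcal{M}_{a,b}(n)/\#G(n)$. *)

theory Defs
  imports "HOL-Probability.Probability_Measure" "HOL-Algebra.Elementary_Groups"
begin

text \<open>An element x of Z_l is represented by the sequence of its reductions:
  x n is the residue of x modulo l^n, taken in {0..<l^n}.\<close>

type_synonym zl = "nat \<Rightarrow> int"

definition Zl :: "nat \<Rightarrow> zl set" where
  "Zl l = {x. \<forall>n. 0 \<le> x n \<and> x n < int l ^ n \<and> x n = x (Suc n) mod int l ^ n}"

definition zadd :: "nat \<Rightarrow> zl \<Rightarrow> zl \<Rightarrow> zl" where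
  "zadd l x y = (\<lambda>n. (x n + y n) mod int l ^ n)"

definition zsub :: "nat \<Rightarrow> zl \<Rightarrow> zl \<Rightarrow> zl" where
  "zsub l x y = (\<lambda>n. (x n - y n) mod int l ^ n)"

definition zmul :: "nat \<Rightarrow> zl \<Rightarrow> zl \<Rightarrow> zl" where
  "zmul l x y = (\<lambda>n. (x n * y n) mod int l ^ n)"

definition zconst :: "nat \<Rightarrow> int \<Rightarrow> zl" where
  "zconst l c = (\<lambda>n. c mod int l ^ n)"

text \<open>(a,b,c,d) is the matrix [[a,b],[c,d]], acting on column vectors.\<close>

type_synonym mat2 = "zl \<times> zl \<times> zl \<times> zl"

definition Mat2 :: "nat \<Rightarrow> mat2 set" where
  "Mat2 l = {(a,b,c,d). a \<in> Zl l \<and> b \<in> Zl l \<and> c \<in> Zl l \<and> d \<in> Zl l}"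

definition mmul :: "nat \<Rightarrow> mat2 \<Rightarrow> mat2 \<Rightarrow> mat2" where
  "mmul l M N = (case M of (a,b,c,d) \<Rightarrow> case N of (e,f,g,h) \<Rightarrow>
     (zadd l (zmul l a e) (zmul l b g), zadd l (zmul l a f) (zmul l b h),
      zadd l (zmul l c e) (zmul l d g), zadd l (zmul l c f) (zmul l d h)))"

definition madd :: "nat \<Rightarrow> mat2 \<Rightarrow> mat2 \<Rightarrow> mat2" where
  "madd l M N = (case M of (a,b,c,d) \<Rightarrow> case N of (e,f,g,h) \<Rightarrow>
     (zadd l a e, zadd l b f, zadd l c g, zadd l d h))"

definition msub :: "nat \<Rightarrow> mat2 \<Rightarrow> mat2 \<Rightarrow> mat2" where
  "msub l M N = (case M of (a,b,c,d) \<Rightarrow> case N of (e,f,g,h) \<Rightarrow>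
     (zsub l a e, zsub l b f, zsub l c g, zsub l d h))"

definition mscal :: "nat \<Rightarrow> zl \<Rightarrow> mat2 \<Rightarrow> mat2" where
  "mscal l x M = (case M of (a,b,c,d) \<Rightarrow> (zmul l x a, zmul l x b, zmul l x c, zmul l x d))"

definition mid :: "nat \<Rightarrow> mat2" where
  "mid l = (zconst l 1, zconst l 0, zconst l 0, zconst l 1)"

definition GL2 :: "nat \<Rightarrow> mat2 set" where
  "GL2 l = {M \<in> Mat2 l. \<exists>N \<in> Mat2 l. mmul l M N = mid l \<and> mmul l N M = mid l}"

definition GL2grp :: "nat \<Rightarrow> mat2 monoid" where
  "GL2grp l = \<lparr>carrier = GL2 l, monoid.mult = mmul l, one = mid l\<rparr>"

definition red :: "mat2 \<Rightarrow> nat \<Rightarrow> int \<times> int \<times> int \<times> int" where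
  "red M n = (case M of (a,b,c,d) \<Rightarrow> (a n, b n, c n, d n))"

definition img :: "mat2 set \<Rightarrow> nat \<Rightarrow> (int \<times> int \<times> int \<times> int) set" where
  "img X n = (\<lambda>M. red M n) ` X"

definition lopen :: "nat \<Rightarrow> mat2 set \<Rightarrow> bool" where
  "lopen l U \<longleftrightarrow> U \<subseteq> Mat2 l \<and>
     (\<forall>M\<in>U. \<exists>k. {N \<in> Mat2 l. red N k = red M k} \<subseteq> U)"

definition lopen_in :: "nat \<Rightarrow> mat2 set \<Rightarrow> mat2 set \<Rightarrow> bool" where
  "lopen_in l S U \<longleftrightarrow> (\<exists>V. lopen l V \<and> U = V \<inter> S)"

text \<open>Matrix of left multiplication by the generator w (with w^2 = t w - n) in the
  Z_l-basis (1, w) of the quadratic ring Z_l[X]/(X^2 - t X + n).\<close>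
definition companion :: "nat \<Rightarrow> zl \<Rightarrow> zl \<Rightarrow> mat2" where
  "companion l t n = (zconst l 0, zsub l (zconst l 0) n, zconst l 1, t)"

text \<open>Image of the quadratic ring Z_l[w] under the left regular representation in the
  basis (1,w), transported by a change of basis P in GL_2(Z_l).\<close>
definition qring_image :: "nat \<Rightarrow> zl \<Rightarrow> zl \<Rightarrow> mat2 \<Rightarrow> mat2 \<Rightarrow> mat2 set" where
  "qring_image l t n P Pinv =
     {mmul l (mmul l P (madd l (mscal l x (mid l)) (mscal l y (companion l t n)))) Pinv
      | x y. x \<in> Zl l \<and> y \<in> Zl l}"

definition cartan :: "nat \<Rightarrow> mat2 set \<Rightarrow> bool" where
  "cartan l C \<longleftrightarrow> (\<exists>t n P Pinv. t \<in> Zl l \<and> n \<in> Zl l \<and>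
     zsub l (zmul l t t) (zmul l (zconst l 4) n) \<noteq> zconst l 0 \<and>
     P \<in> Mat2 l \<and> Pinv \<in> Mat2 l \<and> mmul l P Pinv = mid l \<and> mmul l Pinv P = mid l \<and>
     C = {r \<in> qring_image l t n P Pinv. \<exists>s \<in> qring_image l t n P Pinv.
            mmul l r s = mid l \<and> mmul l s r = mid l})"

definition normalizer2 :: "nat \<Rightarrow> mat2 set \<Rightarrow> mat2 set" where
  "normalizer2 l C = {g \<in> GL2 l.
     (\<lambda>x. mmul l (mmul l g x) (inv\<^bsub>GL2grp l\<^esub> g)) ` C = C}"

text \<open>lim_n Z/l^n Z (transition maps: multiplication by l) is identified with
  Z[1/l]/Z, represented by the rationals in [0,1) with l-power denominator.\<close>
definition Tl :: "nat \<Rightarrow> rat set" where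
  "Tl l = {q. 0 \<le> q \<and> q < 1 \<and> (\<exists>k (u::int). q = of_int u / of_nat (l ^ k))}"

definition lden :: "nat \<Rightarrow> rat \<Rightarrow> nat" where
  "lden l q = (LEAST k. \<exists>u::int. q = of_int u / of_nat (l ^ k))"

text \<open>Action of a matrix of M_2(Z_l) on (Z[1/l]/Z)^2: a vector with entries
  u/l^k, v/l^k is an element of (Z/l^k Z)^2 and is acted on by M mod l^k.\<close>
definition mact :: "nat \<Rightarrow> mat2 \<Rightarrow> rat \<times> rat \<Rightarrow> rat \<times> rat" where
  "mact l M v = (case M of (a,b,c,d) \<Rightarrow>
     (let k = max (lden l (fst v)) (lden l (snd v));
          u = \<lfloor>fst v * of_nat (l ^ k)\<rfloor>; w = \<lfloor>snd v * of_nat (l ^ k)\<rfloor>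
      in (frac (of_int (a k * u + b k * w) / of_nat (l ^ k)),
          frac (of_int (c k * u + d k * w) / of_nat (l ^ k)))))"

definition kerMI :: "nat \<Rightarrow> mat2 \<Rightarrow> (rat \<times> rat) set" where
  "kerMI l M = {v \<in> Tl l \<times> Tl l. mact l (msub l M (mid l)) v = (0, 0)}"

definition kergrp :: "nat \<Rightarrow> mat2 \<Rightarrow> (rat \<times> rat) monoid" where
  "kergrp l M = \<lparr>carrier = kerMI l M,
     monoid.mult = (\<lambda>v w. (frac (fst v + fst w), frac (snd v + snd w))), one = (0, 0)\<rparr>"

definition Mab :: "nat \<Rightarrow> mat2 set \<Rightarrow> nat \<Rightarrow> nat \<Rightarrow> mat2 set" where
  "Mab l G a b = {M \<in> G. kergrp l M \<cong>
       DirProd (integer_mod_group (l ^ a)) (integer_mod_group (l ^ (a + b)))}"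

definition mu_n :: "nat \<Rightarrow> mat2 set \<Rightarrow> nat \<Rightarrow> nat \<Rightarrow> nat \<Rightarrow> real" where
  "mu_n l G a b n = real (card (img (Mab l G a b) n)) / real (card (img G n))"

definition haar_prob :: "nat \<Rightarrow> mat2 set \<Rightarrow> mat2 measure \<Rightarrow> bool" where
  "haar_prob l G \<mu> \<longleftrightarrow> prob_space \<mu> \<and> space \<mu> = G \<and>
     sets \<mu> = sigma_sets G {U. lopen_in l G U} \<and>
     (\<forall>g\<in>G. \<forall>A\<in>sets \<mu>. (\<lambda>x. mmul l g x) ` A \<in> sets \<mu> \<and> emeasure \<mu> ((\<lambda>x. mmul l g x) ` A) = emeasure \<mu> A)"

end

theory Submission
  imports Defs "HOL-Number_Theory.Modular_Inverse"
begin

text \<open>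
  A vector of \<open>(Z[1/l]/Z)\<^sup>2\<close> of level \<open>m\<close> lies in \<open>ker (M - I)\<close> iff \<open>M - I\<close> reduced
  modulo \<open>l ^ m\<close> kills its numerators. If this kernel is \<open>Z/l^a \<times> Z/l^(a+b)\<close>, it is killed
  by \<open>l ^ (a + b)\<close>, and then any matrix congruent to \<open>M\<close> modulo \<open>l ^ (a + b + 1)\<close> has the
  same kernel. So \<open>M_{a,b}\<close> is a union of fibres of the reduction modulo \<open>l ^ n\<close> for
  \<open>n > a + b\<close>, and these fibres, being left cosets of one open subgroup, all have Haar
  measure \<open>1 / #G(n)\<close>.

  If \<open>det (M - I) \<noteq> 0\<close>, then at a high enough level \<open>M - I = l ^ a (u q; r s)\<close> with some entry
  a unit and \<open>l ^ b\<close> the exact power dividing \<open>u s - q r\<close>; eliminating with the unit entry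
  identifies the kernel with \<open>Z/l^a \<times> Z/l^(a+b)\<close>. Hence the complement of the union of
  the \<open>M_{a,b}\<close> consists of matrices with eigenvalue \<open>1\<close>. Being open in \<open>GL_2\<close> or in the
  normalizer of a Cartan subgroup, \<open>G\<close> contains the scalars \<open>t ^ j\<close> for
  \<open>t = 1 + l ^ (k + 1)\<close>. The translates of that set by these scalars have equal measure, and
  no matrix lies in three of them because it has at most two eigenvalues; so the set is null.
\<close>

lemma Zl_D: "x \<in> Zl l \<Longrightarrow> 0 \<le> x n \<and> x n < int l ^ n \<and> x n = x (Suc n) mod int l ^ n"
  unfolding Zl_def mem_Collect_eq by (erule allE)

lemma Zl_bounds: "x \<in> Zl l \<Longrightarrow> 0 \<le> x n \<and> x n < int l ^ n"
  using Zl_D by blast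

lemma Zl_mod_self: "x \<in> Zl l \<Longrightarrow> x n mod int l ^ n = x n"
  using Zl_bounds by simp

lemma Zl_Suc_mod: "x \<in> Zl l \<Longrightarrow> x (Suc n) mod int l ^ n = x n"
  using Zl_D by metis

lemma Zl_mod_le:
  assumes "x \<in> Zl l" "k \<le> n"
  shows "x n mod int l ^ k = x k"
  using assms(2)
proof (induction n rule: dec_induct)
  case base
  show ?case using Zl_mod_self[OF assms(1)] .
next
  case (step n)
  have "x (Suc n) mod int l ^ k = x (Suc n) mod int l ^ n mod int l ^ k"
    using step.hyps by (simp add: mod_mod_cancel le_imp_power_dvd)
  then show ?case using Zl_Suc_mod[OF assms(1)] step.IH by simp
qed

lemma Zl_cong_le: "x \<in> Zl l \<Longrightarrow> k \<le> n \<Longrightarrow> [x n = x k] (mod int l ^ k)"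
  using Zl_mod_le Zl_mod_self unfolding cong_def by metis

lemma Zl_reduceI:
  assumes "l > 0" and "\<And>n. [f (Suc n) = f n] (mod int l ^ n)"
  shows "(\<lambda>n. f n mod int l ^ n) \<in> Zl l"
  unfolding Zl_def
proof (intro CollectI allI conjI)
  fix n
  have "f (Suc n) mod int l ^ Suc n mod int l ^ n = f (Suc n) mod int l ^ n"
    by (simp add: mod_mod_cancel)
  then show "f n mod int l ^ n = f (Suc n) mod int l ^ Suc n mod int l ^ n"
    using assms(2)[of n] by (simp add: cong_def)
qed (use assms(1) in auto)

lemma Zl_cong_Suc: "x \<in> Zl l \<Longrightarrow> [x (Suc n) = x n] (mod int l ^ n)"
  by (simp add: Zl_cong_le)

lemma zadd_Zl: "l > 0 \<Longrightarrow> x \<in> Zl l \<Longrightarrow> y \<in> Zl l \<Longrightarrow> zadd l x y \<in> Zl l"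
  unfolding zadd_def by (intro Zl_reduceI cong_add Zl_cong_Suc)

lemma zsub_Zl: "l > 0 \<Longrightarrow> x \<in> Zl l \<Longrightarrow> y \<in> Zl l \<Longrightarrow> zsub l x y \<in> Zl l"
  unfolding zsub_def by (intro Zl_reduceI cong_diff Zl_cong_Suc)

lemma zmul_Zl: "l > 0 \<Longrightarrow> x \<in> Zl l \<Longrightarrow> y \<in> Zl l \<Longrightarrow> zmul l x y \<in> Zl l"
  unfolding zmul_def by (intro Zl_reduceI cong_mult Zl_cong_Suc)

lemma zconst_Zl: "l > 0 \<Longrightarrow> zconst l c \<in> Zl l"
  unfolding zconst_def by (intro Zl_reduceI cong_refl)

lemma mmul_Mat2: "l > 0 \<Longrightarrow> M \<in> Mat2 l \<Longrightarrow> N \<in> Mat2 l \<Longrightarrow> mmul l M N \<in> Mat2 l"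
  by (auto simp: Mat2_def mmul_def zadd_Zl zmul_Zl)

lemma madd_Mat2: "l > 0 \<Longrightarrow> M \<in> Mat2 l \<Longrightarrow> N \<in> Mat2 l \<Longrightarrow> madd l M N \<in> Mat2 l"
  by (auto simp: Mat2_def madd_def zadd_Zl)

lemma msub_Mat2: "l > 0 \<Longrightarrow> M \<in> Mat2 l \<Longrightarrow> N \<in> Mat2 l \<Longrightarrow> msub l M N \<in> Mat2 l"
  by (auto simp: Mat2_def msub_def zsub_Zl)

lemma mscal_Mat2: "l > 0 \<Longrightarrow> x \<in> Zl l \<Longrightarrow> M \<in> Mat2 l \<Longrightarrow> mscal l x M \<in> Mat2 l"
  by (auto simp: Mat2_def mscal_def zmul_Zl)

lemma mid_Mat2: "l > 0 \<Longrightarrow> mid l \<in> Mat2 l"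
  by (auto simp: Mat2_def mid_def zconst_Zl)

lemma companion_Mat2: "l > 0 \<Longrightarrow> t \<in> Zl l \<Longrightarrow> n \<in> Zl l \<Longrightarrow> companion l t n \<in> Mat2 l"
  by (auto simp: Mat2_def companion_def zconst_Zl zsub_Zl)

lemma zadd_assoc: "zadd l (zadd l x y) z = zadd l x (zadd l y z)"
  by (simp add: zadd_def fun_eq_iff mod_simps add.assoc)

lemma zadd_commute: "zadd l x y = zadd l y x"
  by (simp add: zadd_def add.commute)

lemma zadd_left_commute: "zadd l x (zadd l y z) = zadd l y (zadd l x z)"
  by (simp add: zadd_def fun_eq_iff mod_simps add.left_commute)

lemma zmul_assoc: "zmul l (zmul l x y) z = zmul l x (zmul l y z)"
  by (simp add: zmul_def fun_eq_iff mod_simps mult.assoc)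

lemma zmul_zadd_distrib: "zmul l (zadd l x y) z = zadd l (zmul l x z) (zmul l y z)"
  by (simp add: zmul_def zadd_def fun_eq_iff mod_simps distrib_right)

lemma zmul_zadd_distrib2: "zmul l x (zadd l y z) = zadd l (zmul l x y) (zmul l x z)"
  by (simp add: zmul_def zadd_def fun_eq_iff mod_simps distrib_left)

lemma mmul_assoc: "mmul l (mmul l M N) P = mmul l M (mmul l N P)"
  by (cases M; cases N; cases P)
    (simp add: mmul_def zmul_assoc zmul_zadd_distrib zmul_zadd_distrib2
      zadd_assoc zadd_commute zadd_left_commute)

lemma mmul_mid_left: "M \<in> Mat2 l \<Longrightarrow> mmul l (mid l) M = M"
  by (cases M) (auto simp: mmul_def zadd_def zmul_def fun_eq_iff mid_def zconst_def Mat2_def,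
      simp_all add: mod_simps Zl_mod_self)

lemma mmul_mid_right: "M \<in> Mat2 l \<Longrightarrow> mmul l M (mid l) = M"
  by (cases M) (auto simp: mmul_def zadd_def zmul_def fun_eq_iff mid_def zconst_def Mat2_def,
      simp_all add: mod_simps Zl_mod_self)

definition Mat2mon :: "nat \<Rightarrow> mat2 monoid" where
  "Mat2mon l = \<lparr>carrier = Mat2 l, monoid.mult = mmul l, one = mid l\<rparr>"

lemma monoid_Mat2mon: "l > 0 \<Longrightarrow> monoid (Mat2mon l)"
  by unfold_locales
    (auto simp: Mat2mon_def mmul_Mat2 mid_Mat2 mmul_assoc mmul_mid_left mmul_mid_right)

lemma group_GL2grp:
  assumes "l > 0"
  shows "group (GL2grp l)"
proof -
  have "GL2grp l = units_of (Mat2mon l)"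
    unfolding GL2grp_def units_of_def Mat2mon_def GL2_def Units_def by auto
  then show ?thesis
    using monoid.units_group[OF monoid_Mat2mon[OF assms]] by simp
qed

lemma GL2grp_simps [simp]:
  "carrier (GL2grp l) = GL2 l" "monoid.mult (GL2grp l) = mmul l" "one (GL2grp l) = mid l"
  by (simp_all add: GL2grp_def)

lemma GL2_Mat2: "GL2 l \<subseteq> Mat2 l"
  by (auto simp: GL2_def)

lemma red_eq_le:
  assumes "M \<in> Mat2 l" "N \<in> Mat2 l" "red M n = red N n" "k \<le> n"
  shows "red M k = red N k"
  using assms by (cases M; cases N) (auto simp: red_def Mat2_def Zl_mod_le[symmetric])

lemma red_mmul_right: "red N n = red N' n \<Longrightarrow> red (mmul l M N) n = red (mmul l M N') n"
  by (cases M; cases N; cases N') (simp add: red_def mmul_def zadd_def zmul_def)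

lemma finite_img:
  assumes "X \<subseteq> Mat2 l"
  shows "finite (img X n)"
proof -
  from assms have "img X n \<subseteq> {0..<int l ^ n} \<times> {0..<int l ^ n} \<times> {0..<int l ^ n} \<times> {0..<int l ^ n}"
    by (auto simp: img_def red_def Mat2_def Zl_bounds)
  then show ?thesis by (rule finite_subset) auto
qed

definition killed_by :: "nat \<Rightarrow> nat \<Rightarrow> rat \<Rightarrow> bool" where
  "killed_by l m q \<longleftrightarrow> q * of_nat (l ^ m) \<in> \<int>"

definition numer_at :: "nat \<Rightarrow> nat \<Rightarrow> rat \<Rightarrow> int" where
  "numer_at l m q = \<lfloor>q * of_nat (l ^ m)\<rfloor>"

definition vlevel :: "nat \<Rightarrow> rat \<times> rat \<Rightarrow> nat" where
  "vlevel l v = max (lden l (fst v)) (lden l (snd v))"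

lemma of_int_numer_at: "killed_by l m q \<Longrightarrow> of_int (numer_at l m q) = q * of_nat (l ^ m)"
  unfolding killed_by_def numer_at_def by (metis Ints_cases floor_of_int)

lemma numer_at_divide: "l > 0 \<Longrightarrow> killed_by l m q \<Longrightarrow> q = of_int (numer_at l m q) / of_nat (l ^ m)"
  using of_int_numer_at[of l m q] by (simp add: field_simps)

lemma killed_by_mono:
  assumes "killed_by l m q" "m \<le> m'"
  shows "killed_by l m' q \<and> numer_at l m' q = numer_at l m q * int l ^ (m' - m)"
proof -
  have "q * of_nat (l ^ m') = q * of_nat (l ^ m) * of_nat (l ^ (m' - m))"
    using assms(2) by (simp add: power_add[symmetric])
  also have "\<dots> = of_int (numer_at l m q * int l ^ (m' - m))"
    using of_int_numer_at[OF assms(1)] by simp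
  finally show ?thesis
    unfolding killed_by_def numer_at_def by (metis Ints_of_int floor_of_int)
qed

lemma numer_at_bounds:
  assumes "q \<in> Tl l" "l > 0"
  shows "0 \<le> numer_at l m q \<and> numer_at l m q < int l ^ m"
proof -
  have "0 \<le> q * of_nat (l ^ m)" "q * of_nat (l ^ m) < of_nat (l ^ m)"
    using assms by (auto simp: Tl_def)
  then show ?thesis
    unfolding numer_at_def by (metis floor_less_iff of_int_of_nat_eq of_nat_power zero_le_floor)
qed

lemma lden_le_iff:
  assumes "q \<in> Tl l" "l > 0"
  shows "lden l q \<le> m \<longleftrightarrow> killed_by l m q"
proof
  have "\<exists>k u. q = of_int u / of_nat (l ^ k)"
    using assms(1) by (auto simp: Tl_def)
  then obtain u where u: "q = of_int u / of_nat (l ^ lden l q)"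
    using LeastI_ex[of "\<lambda>k. \<exists>u::int. q = of_int u / of_nat (l ^ k)"] unfolding lden_def by blast
  have "killed_by l (lden l q) q"
    unfolding killed_by_def using assms(2) by (subst u) simp
  then show "killed_by l m q" if "lden l q \<le> m"
    using killed_by_mono that by blast
next
  assume "killed_by l m q"
  then have "\<exists>u::int. q = of_int u / of_nat (l ^ m)"
    using numer_at_divide assms(2) by blast
  then show "lden l q \<le> m"
    unfolding lden_def by (rule Least_le)
qed

lemma vlevel_le_iff:
  assumes "v \<in> Tl l \<times> Tl l" "l > 0"
  shows "vlevel l v \<le> m \<longleftrightarrow> killed_by l m (fst v) \<and> killed_by l m (snd v)"
  using assms lden_le_iff[of _ l m] by (auto simp: vlevel_def)

lemma killed_by_vlevel:
  assumes "v \<in> Tl l \<times> Tl l" "l > 0"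
  shows "killed_by l (vlevel l v) (fst v)" "killed_by l (vlevel l v) (snd v)"
  using vlevel_le_iff[OF assms] by blast+

lemma Tl_of_numer:
  assumes "0 \<le> U" "U < int l ^ m" "l > 0"
  defines "q \<equiv> of_int U / of_nat (l ^ m)"
  shows "q \<in> Tl l" "killed_by l m q" "numer_at l m q = U"
proof -
  have p: "(0::rat) < of_nat (l ^ m)"
    using assms(3) by simp
  have "of_int U < (of_nat (l ^ m) :: rat)"
    using assms(2) by (metis of_int_less_iff of_int_of_nat_eq of_nat_power)
  then show "q \<in> Tl l"
    using p assms(1) by (auto simp: Tl_def q_def)
  show "killed_by l m q" "numer_at l m q = U"
    using p by (simp_all add: killed_by_def numer_at_def q_def)
qed

lemma frac_divide_pow:
  assumes "l > 0"
  shows "frac (of_int X / of_nat (l ^ k) :: rat) = of_int (X mod int l ^ k) / of_nat (l ^ k)"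
proof -
  have e: "(of_nat (l ^ k) :: rat) = of_int (int l ^ k)"
    by simp
  have "frac (of_int X / of_nat (l ^ k) :: rat) = of_int X / of_int (int l ^ k) - of_int (X div int l ^ k)"
    unfolding frac_def e floor_divide_of_int_eq by simp
  also have "\<dots> = of_int (X - int l ^ k * (X div int l ^ k)) / of_int (int l ^ k)"
    using assms by (simp add: field_simps)
  finally show ?thesis
    unfolding e by (simp add: minus_mult_div_eq_mod)
qed

lemma divide_pow_Ints_iff:
  assumes "l > 0"
  shows "(of_int X / of_nat l ^ k :: rat) \<in> \<int> \<longleftrightarrow> int l ^ k dvd X"
  using of_int_div_of_int_in_Ints_iff[of X "int l ^ k", where 'a=rat] assms by simp

lemma frac_add_numer_at:
  assumes "l > 0" "killed_by l m q1" "killed_by l m q2"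
  shows "frac (q1 + q2) = of_int ((numer_at l m q1 + numer_at l m q2) mod int l ^ m) / of_nat (l ^ m)"
proof -
  have "q1 + q2 = of_int (numer_at l m q1 + numer_at l m q2) / of_nat (l ^ m)"
    using of_int_numer_at[OF assms(2)] of_int_numer_at[OF assms(3)] assms(1) by (simp add: field_simps)
  then show ?thesis
    by (simp only: frac_divide_pow[OF assms(1)])
qed

lemma numer_at_frac_add:
  assumes "l > 0" "killed_by l m q1" "killed_by l m q2"
  shows "numer_at l m (frac (q1 + q2)) = (numer_at l m q1 + numer_at l m q2) mod int l ^ m"
  using Tl_of_numer(3)[of "(numer_at l m q1 + numer_at l m q2) mod int l ^ m" l m] assms
  by (simp add: frac_add_numer_at)

lemma frac_mult_numer_at:
  assumes "l > 0" "killed_by l m q"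
  shows "frac (of_nat n * q) = of_int ((int n * numer_at l m q) mod int l ^ m) / of_nat (l ^ m)"
proof -
  have "of_nat n * q = of_int (int n * numer_at l m q) / of_nat (l ^ m)"
    using of_int_numer_at[OF assms(2)] assms(1) by (simp add: field_simps)
  then show ?thesis
    by (simp only: frac_divide_pow[OF assms(1)])
qed

lemma killed_by_frac_pow_mult:
  "killed_by l j (frac (of_nat l ^ i * q)) \<longleftrightarrow> killed_by l (j + i) q"
proof -
  have "frac (of_nat l ^ i * q) * of_nat (l ^ j)
      = q * of_nat (l ^ (j + i)) - of_int (\<lfloor>of_nat l ^ i * q\<rfloor> * int (l ^ j))"
    by (simp add: frac_def algebra_simps power_add)
  then show ?thesis
    unfolding killed_by_def by (simp add: diff_in_Ints_iff_right)
qed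

lemma killed_by_Suc_dvd:
  assumes "l > 0" "killed_by l (Suc m) q" "int l dvd numer_at l (Suc m) q"
  shows "killed_by l m q"
proof -
  obtain U where U: "numer_at l (Suc m) q = int l * U"
    using assms(3) by (auto elim!: dvdE)
  have "of_nat l * of_int U = of_nat l * (q * of_nat (l ^ m))"
    using of_int_numer_at[OF assms(2)] unfolding U by (simp add: algebra_simps)
  then have "q * of_nat (l ^ m) = of_int U"
    using assms(1) by simp
  then show ?thesis
    unfolding killed_by_def by simp
qed

lemma frac_frac_add: "frac (frac x + y) = frac (x + (y::rat))"
proof -
  have "frac x + y = (x + y) + of_int (- \<lfloor>x\<rfloor>)"
    by (simp add: frac_def)
  then show ?thesis
    by (simp only: frac_add_of_int_right)
qed

section \<open>Kernels of matrices on the torsion module\<close>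

definition kills :: "nat \<Rightarrow> zl \<Rightarrow> zl \<Rightarrow> zl \<Rightarrow> zl \<Rightarrow> nat \<Rightarrow> int \<Rightarrow> int \<Rightarrow> bool" where
  "kills l \<alpha> \<beta> \<gamma> \<delta> m U W \<longleftrightarrow>
     int l ^ m dvd \<alpha> m * U + \<beta> m * W \<and> int l ^ m dvd \<gamma> m * U + \<delta> m * W"

definition tker :: "nat \<Rightarrow> zl \<Rightarrow> zl \<Rightarrow> zl \<Rightarrow> zl \<Rightarrow> (rat \<times> rat) set" where
  "tker l \<alpha> \<beta> \<gamma> \<delta> = {v \<in> Tl l \<times> Tl l.
     kills l \<alpha> \<beta> \<gamma> \<delta> (vlevel l v) (numer_at l (vlevel l v) (fst v)) (numer_at l (vlevel l v) (snd v))}"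

definition tgrp :: "(rat \<times> rat) set \<Rightarrow> (rat \<times> rat) monoid" where
  "tgrp S = \<lparr>carrier = S, monoid.mult = (\<lambda>v w. (frac (fst v + fst w), frac (snd v + snd w))),
     one = (0, 0)\<rparr>"

lemma kergrp_eq_tgrp: "kergrp l M = tgrp (kerMI l M)"
  by (simp add: kergrp_def tgrp_def)

lemma kerMI_eq_tker:
  assumes "l > 0" "msub l M (mid l) = (\<alpha>, \<beta>, \<gamma>, \<delta>)"
  shows "kerMI l M = tker l \<alpha> \<beta> \<gamma> \<delta>"
  using assms
  by (auto simp: kerMI_def tker_def mact_def Let_def kills_def numer_at_def vlevel_def
      divide_pow_Ints_iff simp del: of_int_add of_int_mult)

lemma kills_mod:
  "kills l \<alpha> \<beta> \<gamma> \<delta> m (X mod int l ^ m) (Y mod int l ^ m) \<longleftrightarrow> kills l \<alpha> \<beta> \<gamma> \<delta> m X Y"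
proof -
  have "L dvd x * (X mod L) + y * (Y mod L) \<longleftrightarrow> L dvd x * X + y * Y" for x y L :: int
    by (rule cong_dvd_iff) (intro cong_add cong_mult cong_refl, simp_all add: cong_def)
  then show ?thesis
    unfolding kills_def by simp
qed

lemma tgrp_pow:
  assumes "v \<in> Tl l \<times> Tl l"
  shows "v [^]\<^bsub>tgrp S\<^esub> n = (frac (of_nat n * fst v), frac (of_nat n * snd v))"
proof (induction n)
  case 0
  show ?case by (simp add: tgrp_def)
next
  case (Suc n)
  then show ?case by (simp add: tgrp_def frac_frac_add algebra_simps)
qed

lemma tker_Tl: "tker l \<alpha> \<beta> \<gamma> \<delta> \<subseteq> Tl l \<times> Tl l"
  by (auto simp: tker_def)

abbreviation Zmod_pair :: "nat \<Rightarrow> nat \<Rightarrow> nat \<Rightarrow> (int \<times> int) monoid" where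
  "Zmod_pair l a b \<equiv> integer_mod_group (l ^ a) \<times>\<times> integer_mod_group (l ^ (a + b))"

lemma Zmod_pair_pow_exponent:
  assumes "y \<in> carrier (Zmod_pair l a b)"
  shows "y [^]\<^bsub>Zmod_pair l a b\<^esub> (l ^ (a + b)) = \<one>\<^bsub>Zmod_pair l a b\<^esub>"
proof -
  have pow: "(x, z) [^]\<^bsub>G \<times>\<times> H\<^esub> (n::nat) = (x [^]\<^bsub>G\<^esub> n, z [^]\<^bsub>H\<^esub> n)" for G H x z n
    by (induction n) auto
  have "int (l ^ a) dvd int (l ^ (a + b)) * fst y"
    by (simp add: power_add)
  then show ?thesis
    by (cases y) (simp add: pow del: of_nat_power)
qed

locale zl_matrix =
  fixes l :: nat and \<alpha> \<beta> \<gamma> \<delta> :: zl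
  assumes l_pos: "l > 0"
    and entries_Zl: "\<alpha> \<in> Zl l" "\<beta> \<in> Zl l" "\<gamma> \<in> Zl l" "\<delta> \<in> Zl l"
begin

abbreviation K where "K \<equiv> tker l \<alpha> \<beta> \<gamma> \<delta>"

lemma dvd_row_le:
  assumes "x \<in> Zl l" "y \<in> Zl l" "k \<le> m"
  shows "int l ^ k dvd x m * U + y m * W \<longleftrightarrow> int l ^ k dvd x k * U + y k * W"
proof -
  have "[x m * U + y m * W = x k * U + y k * W] (mod int l ^ k)"
    by (intro cong_add cong_mult cong_refl Zl_cong_le assms)
  then show ?thesis
    by (simp add: cong_dvd_iff)
qed

lemma kills_le: "k \<le> m \<Longrightarrow> int l ^ k dvd \<alpha> m * U + \<beta> m * W \<and> int l ^ k dvd \<gamma> m * U + \<delta> m * W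
    \<longleftrightarrow> int l ^ k dvd \<alpha> k * U + \<beta> k * W \<and> int l ^ k dvd \<gamma> k * U + \<delta> k * W"
  using dvd_row_le[OF entries_Zl(1,2)] dvd_row_le[OF entries_Zl(3,4)] by blast

lemma kills_numer_at_level:
  assumes "killed_by l k q1" "killed_by l k q2" "k \<le> m"
  shows "kills l \<alpha> \<beta> \<gamma> \<delta> m (numer_at l m q1) (numer_at l m q2)
    \<longleftrightarrow> kills l \<alpha> \<beta> \<gamma> \<delta> k (numer_at l k q1) (numer_at l k q2)"
proof -
  have scale: "numer_at l m q = numer_at l k q * int l ^ (m - k)" if "killed_by l k q" for q
    using killed_by_mono[OF that assms(3)] by blast
  have pow: "int l ^ m = int l ^ (m - k) * int l ^ k"
    using assms(3) by (simp add: power_add[symmetric])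
  have "x * (U * int l ^ (m - k)) + y * (W * int l ^ (m - k)) = int l ^ (m - k) * (x * U + y * W)"
    for x y U W :: int
    by (simp add: algebra_simps)
  then show ?thesis
    unfolding kills_def scale[OF assms(1)] scale[OF assms(2)] pow
    using l_pos kills_le[OF assms(3)] by simp
qed

lemma tker_iff:
  assumes "v \<in> Tl l \<times> Tl l" "vlevel l v \<le> m"
  shows "v \<in> K \<longleftrightarrow> kills l \<alpha> \<beta> \<gamma> \<delta> m (numer_at l m (fst v)) (numer_at l m (snd v))"
  using kills_numer_at_level[OF killed_by_vlevel[OF assms(1) l_pos] assms(2)] assms(1)
  by (simp add: tker_def)

lemma tker_of_numer:
  "(of_int (X mod int l ^ m) / of_nat (l ^ m), of_int (Y mod int l ^ m) / of_nat (l ^ m)) \<in> K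
    \<longleftrightarrow> kills l \<alpha> \<beta> \<gamma> \<delta> m X Y"
proof -
  have p: "int l ^ m > 0"
    using l_pos by simp
  note X = Tl_of_numer[of "X mod int l ^ m" l m] and Y = Tl_of_numer[of "Y mod int l ^ m" l m]
  have "vlevel l (of_int (X mod int l ^ m) / of_nat (l ^ m), of_int (Y mod int l ^ m) / of_nat (l ^ m)) \<le> m"
    using X Y p l_pos by (simp add: vlevel_le_iff)
  then show ?thesis
    using tker_iff X Y p l_pos kills_mod by simp
qed

lemma zero_in_tker: "(0, 0) \<in> K"
  using tker_of_numer[of 0 0 0] by (simp add: kills_def)

lemma tker_add:
  assumes v: "v \<in> K" and w: "w \<in> K"
  shows "(frac (fst v + fst w), frac (snd v + snd w)) \<in> K"
proof -
  have vt: "v \<in> Tl l \<times> Tl l" and wt: "w \<in> Tl l \<times> Tl l"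
    using v w tker_Tl by blast+
  define m where "m = max (vlevel l v) (vlevel l w)"
  have lv: "vlevel l v \<le> m" "vlevel l w \<le> m"
    unfolding m_def by simp_all
  have kv: "killed_by l m (fst v)" "killed_by l m (snd v)"
    using vlevel_le_iff[OF vt l_pos] lv(1) by blast+
  have kw: "killed_by l m (fst w)" "killed_by l m (snd w)"
    using vlevel_le_iff[OF wt l_pos] lv(2) by blast+
  have "kills l \<alpha> \<beta> \<gamma> \<delta> m (numer_at l m (fst v)) (numer_at l m (snd v))"
    "kills l \<alpha> \<beta> \<gamma> \<delta> m (numer_at l m (fst w)) (numer_at l m (snd w))"
    using tker_iff[OF vt lv(1)] tker_iff[OF wt lv(2)] v w by blast+
  moreover have "x * (U1 + U2) + y * (W1 + W2) = (x * U1 + y * W1) + (x * U2 + y * W2)"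
    for x y U1 U2 W1 W2 :: int
    by (simp add: algebra_simps)
  ultimately have "kills l \<alpha> \<beta> \<gamma> \<delta> m (numer_at l m (fst v) + numer_at l m (fst w))
      (numer_at l m (snd v) + numer_at l m (snd w))"
    unfolding kills_def by (simp add: dvd_add)
  then show ?thesis
    unfolding frac_add_numer_at[OF l_pos kv(1) kw(1)] frac_add_numer_at[OF l_pos kv(2) kw(2)]
      tker_of_numer .
qed

lemma tker_smult:
  assumes v: "v \<in> K"
  shows "(frac (of_nat n * fst v), frac (of_nat n * snd v)) \<in> K"
proof -
  have vt: "v \<in> Tl l \<times> Tl l"
    using v tker_Tl by blast
  define m where "m = vlevel l v"
  note kv = killed_by_vlevel[OF vt l_pos, folded m_def]
  have "kills l \<alpha> \<beta> \<gamma> \<delta> m (numer_at l m (fst v)) (numer_at l m (snd v))"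
    using tker_iff[OF vt] v unfolding m_def by blast
  moreover have "x * (int n * U) + y * (int n * W) = int n * (x * U + y * W)" for x y U W :: int
    by (simp add: algebra_simps)
  ultimately have "kills l \<alpha> \<beta> \<gamma> \<delta> m (int n * numer_at l m (fst v)) (int n * numer_at l m (snd v))"
    unfolding kills_def by simp
  then show ?thesis
    unfolding frac_mult_numer_at[OF l_pos kv(1)] frac_mult_numer_at[OF l_pos kv(2)] tker_of_numer .
qed

lemma monoid_tgrp: "monoid (tgrp K)"
proof unfold_locales
  have frac_Tl: "frac q = q" if "q \<in> Tl l" for q
    using that by (simp add: Tl_def frac_unique_iff)
  show "x \<otimes>\<^bsub>tgrp K\<^esub> y \<in> carrier (tgrp K)" if "x \<in> carrier (tgrp K)" "y \<in> carrier (tgrp K)" for x y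
    using tker_add that by (simp add: tgrp_def)
  show "x \<otimes>\<^bsub>tgrp K\<^esub> y \<otimes>\<^bsub>tgrp K\<^esub> z = x \<otimes>\<^bsub>tgrp K\<^esub> (y \<otimes>\<^bsub>tgrp K\<^esub> z)" for x y z
    by (simp add: tgrp_def frac_frac_add add.commute add.left_commute)
  show "\<one>\<^bsub>tgrp K\<^esub> \<in> carrier (tgrp K)"
    using zero_in_tker by (simp add: tgrp_def)
  show "\<one>\<^bsub>tgrp K\<^esub> \<otimes>\<^bsub>tgrp K\<^esub> x = x" "x \<otimes>\<^bsub>tgrp K\<^esub> \<one>\<^bsub>tgrp K\<^esub> = x"
    if "x \<in> carrier (tgrp K)" for x
  proof -
    have "fst x \<in> Tl l" "snd x \<in> Tl l"
      using that tker_Tl[of l \<alpha> \<beta> \<gamma> \<delta>] by (auto simp: tgrp_def)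
    then show "\<one>\<^bsub>tgrp K\<^esub> \<otimes>\<^bsub>tgrp K\<^esub> x = x" "x \<otimes>\<^bsub>tgrp K\<^esub> \<one>\<^bsub>tgrp K\<^esub> = x"
      using frac_Tl by (simp_all add: tgrp_def)
  qed
qed

lemma group_tgrp: "group (tgrp K)"
proof (rule monoid.group_l_invI[OF monoid_tgrp])
  fix v
  assume "v \<in> carrier (tgrp K)"
  then have v: "v \<in> K"
    by (simp add: tgrp_def)
  then have vt: "v \<in> Tl l \<times> Tl l"
    using tker_Tl by blast
  define N where "N = l ^ vlevel l v"
  have N: "N \<ge> 1"
    using l_pos by (simp add: N_def)
  define y where "y = (frac (of_nat (N - 1) * fst v), frac (of_nat (N - 1) * snd v))"
  have "y \<in> carrier (tgrp K)"
    using tker_smult[OF v] by (simp add: y_def tgrp_def)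
  moreover have "y \<otimes>\<^bsub>tgrp K\<^esub> v = (frac (of_nat N * fst v), frac (of_nat N * snd v))"
    using N by (simp add: tgrp_def y_def frac_frac_add of_nat_diff algebra_simps)
  moreover have "frac (of_nat N * fst v) = 0" "frac (of_nat N * snd v) = 0"
    using killed_by_vlevel[OF vt l_pos]
    by (simp_all add: N_def killed_by_def frac_eq_0_iff mult.commute)
  ultimately show "\<exists>y \<in> carrier (tgrp K). y \<otimes>\<^bsub>tgrp K\<^esub> v = \<one>\<^bsub>tgrp K\<^esub>"
    by (auto simp: tgrp_def)
qed

text \<open>Scaling a kernel vector by \<open>l ^ i\<close> lowers its level by \<open>i\<close>.\<close>

lemma vlevel_le_of_step:
  assumes step: "\<And>w. w \<in> K \<Longrightarrow> vlevel l w \<le> Suc e \<Longrightarrow> vlevel l w \<le> e"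
    and v: "v \<in> K"
  shows "vlevel l v \<le> e"
proof (rule ccontr)
  assume "\<not> vlevel l v \<le> e"
  then have k: "Suc e + (vlevel l v - Suc e) = vlevel l v" "e + (vlevel l v - Suc e) < vlevel l v"
    by simp_all
  have vt: "v \<in> Tl l \<times> Tl l"
    using v tker_Tl by blast
  define w where "w = (frac (of_nat l ^ (vlevel l v - Suc e) * fst v),
    frac (of_nat l ^ (vlevel l v - Suc e) * snd v))"
  have w: "w \<in> K"
    unfolding w_def using tker_smult[OF v, of "l ^ (vlevel l v - Suc e)"] by simp
  have wt: "w \<in> Tl l \<times> Tl l"
    using w tker_Tl by blast
  have lw: "vlevel l w \<le> j \<longleftrightarrow> vlevel l v \<le> j + (vlevel l v - Suc e)" for j
    using vlevel_le_iff[OF wt l_pos, of j] vlevel_le_iff[OF vt l_pos, of "j + (vlevel l v - Suc e)"]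
    by (simp add: w_def killed_by_frac_pow_mult)
  have "vlevel l w \<le> e"
    using step[OF w] lw[of "Suc e"] k(1) by simp
  then have "vlevel l v \<le> e + (vlevel l v - Suc e)"
    using lw by blast
  then show False
    using k(2) by simp
qed

lemma vlevel_le_of_iso:
  assumes "tgrp K \<cong> Zmod_pair l a b" "v \<in> K"
  shows "vlevel l v \<le> a + b"
proof -
  obtain h where h: "h \<in> iso (tgrp K) (Zmod_pair l a b)"
    using assms(1) by (auto simp: is_iso_def)
  interpret group_hom "tgrp K" "Zmod_pair l a b" h
    using h group_tgrp by (simp add: group_hom_def group_hom_axioms_def iso_def DirProd_group)
  have inj: "inj_on h (carrier (tgrp K))"
    using h by (simp add: iso_def bij_betw_def)
  have vc: "v \<in> carrier (tgrp K)"
    using assms(2) by (simp add: tgrp_def)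
  have "h (v [^]\<^bsub>tgrp K\<^esub> (l ^ (a + b))) = h \<one>\<^bsub>tgrp K\<^esub>"
    using Zmod_pair_pow_exponent[OF hom_closed[OF vc]] hom_nat_pow[OF vc] by simp
  then have "v [^]\<^bsub>tgrp K\<^esub> (l ^ (a + b)) = \<one>\<^bsub>tgrp K\<^esub>"
    by (rule inj_onD[OF inj _ G.nat_pow_closed[OF vc] G.one_closed])
  moreover have vt: "v \<in> Tl l \<times> Tl l"
    using assms(2) tker_Tl by blast
  ultimately have "(frac (of_nat (l ^ (a + b)) * fst v), frac (of_nat (l ^ (a + b)) * snd v)) = (0, 0)"
    unfolding tgrp_pow[OF vt] by (simp add: tgrp_def)
  then show ?thesis
    using vlevel_le_iff[OF vt l_pos] by (simp add: killed_by_def frac_eq_0_iff mult.commute)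
qed

end

text \<open>The two kernels agree on vectors of level at most \<open>e + 1\<close>, and
  \<open>vlevel_le_of_step\<close> carries the bound over to the second kernel.\<close>

lemma tker_eq_of_congruent:
  assumes A: "zl_matrix l \<alpha> \<beta> \<gamma> \<delta>" and A': "zl_matrix l \<alpha>' \<beta>' \<gamma>' \<delta>'"
    and eq: "\<alpha> (Suc e) = \<alpha>' (Suc e)" "\<beta> (Suc e) = \<beta>' (Suc e)"
      "\<gamma> (Suc e) = \<gamma>' (Suc e)" "\<delta> (Suc e) = \<delta>' (Suc e)"
    and bound: "\<And>v. v \<in> tker l \<alpha> \<beta> \<gamma> \<delta> \<Longrightarrow> vlevel l v \<le> e"
  shows "tker l \<alpha>' \<beta>' \<gamma>' \<delta>' = tker l \<alpha> \<beta> \<gamma> \<delta>"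
proof -
  interpret A: zl_matrix l \<alpha> \<beta> \<gamma> \<delta> by (fact A)
  interpret A': zl_matrix l \<alpha>' \<beta>' \<gamma>' \<delta>' by (fact A')
  have low: "v \<in> tker l \<alpha> \<beta> \<gamma> \<delta> \<longleftrightarrow> v \<in> tker l \<alpha>' \<beta>' \<gamma>' \<delta>'"
    if "v \<in> Tl l \<times> Tl l" "vlevel l v \<le> Suc e" for v
    using A.tker_iff[OF that] A'.tker_iff[OF that] eq by (simp add: kills_def)
  have bound': "vlevel l v \<le> e" if "v \<in> tker l \<alpha>' \<beta>' \<gamma>' \<delta>'" for v
    using A'.vlevel_le_of_step[OF _ that] low bound tker_Tl by blast
  show ?thesis
  proof (intro equalityI subsetI)
    fix v
    assume "v \<in> tker l \<alpha>' \<beta>' \<gamma>' \<delta>'"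
    then show "v \<in> tker l \<alpha> \<beta> \<gamma> \<delta>"
      using low bound' tker_Tl by (meson le_SucI subsetD)
  next
    fix v
    assume "v \<in> tker l \<alpha> \<beta> \<gamma> \<delta>"
    then show "v \<in> tker l \<alpha>' \<beta>' \<gamma>' \<delta>'"
      using low bound tker_Tl by (meson le_SucI subsetD)
  qed
qed

lemma zl_matrix_msub_mid:
  assumes "l > 0" "M \<in> Mat2 l" "msub l M (mid l) = (\<alpha>, \<beta>, \<gamma>, \<delta>)"
  shows "zl_matrix l \<alpha> \<beta> \<gamma> \<delta>"
  using msub_Mat2[OF assms(1,2) mid_Mat2[OF assms(1)]] assms by (simp add: zl_matrix_def Mat2_def)

lemma kerMI_eq_of_red_eq:
  assumes l: "l > 0" and M: "M \<in> Mat2 l" and N: "N \<in> Mat2 l"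
    and iso: "kergrp l M \<cong> Zmod_pair l a b" and red: "red M n = red N n" and n: "a + b < n"
  shows "kerMI l N = kerMI l M"
proof -
  obtain \<alpha> \<beta> \<gamma> \<delta> where E: "msub l M (mid l) = (\<alpha>, \<beta>, \<gamma>, \<delta>)"
    by (cases "msub l M (mid l)")
  obtain \<alpha>' \<beta>' \<gamma>' \<delta>' where E': "msub l N (mid l) = (\<alpha>', \<beta>', \<gamma>', \<delta>')"
    by (cases "msub l N (mid l)")
  interpret A: zl_matrix l \<alpha> \<beta> \<gamma> \<delta>
    by (rule zl_matrix_msub_mid[OF l M E])
  have "red M (Suc (a + b)) = red N (Suc (a + b))"
    using red_eq_le[OF M N red] n by simp
  moreover have "red (msub l M (mid l)) k = red (msub l N (mid l)) k" if "red M k = red N k" for k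
    using that by (cases M; cases N) (simp add: msub_def red_def zsub_def mid_def)
  ultimately have "\<alpha> (Suc (a + b)) = \<alpha>' (Suc (a + b))" "\<beta> (Suc (a + b)) = \<beta>' (Suc (a + b))"
    "\<gamma> (Suc (a + b)) = \<gamma>' (Suc (a + b))" "\<delta> (Suc (a + b)) = \<delta>' (Suc (a + b))"
    unfolding E E' by (simp_all add: red_def)
  moreover have "vlevel l v \<le> a + b" if "v \<in> tker l \<alpha> \<beta> \<gamma> \<delta>" for v
    using A.vlevel_le_of_iso[OF _ that] iso kerMI_eq_tker[OF l E] by (simp add: kergrp_eq_tgrp)
  ultimately show ?thesis
    using tker_eq_of_congruent[OF A.zl_matrix_axioms zl_matrix_msub_mid[OF l N E']]
      kerMI_eq_tker[OF l E] kerMI_eq_tker[OF l E'] by simp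
qed

lemma Mab_red_closed:
  assumes "l > 0" "G \<subseteq> Mat2 l" "M \<in> Mab l G a b" "N \<in> G" "red N n = red M n" "a + b < n"
  shows "N \<in> Mab l G a b"
proof -
  have "M \<in> G" and iso: "kergrp l M \<cong> Zmod_pair l a b"
    using assms(3) by (auto simp: Mab_def)
  then have "M \<in> Mat2 l" "N \<in> Mat2 l"
    using assms(2,4) by auto
  then have "kerMI l N = kerMI l M"
    using kerMI_eq_of_red_eq[OF assms(1) _ _ iso assms(5)[symmetric] assms(6)] by blast
  then show ?thesis
    using assms(4) iso by (simp add: Mab_def kergrp_def)
qed

section \<open>Kernels of matrices with nonzero determinant\<close>

lemma div_cong_of_dvd:
  fixes x y A B :: int
  assumes "B dvd x" "B dvd y" "[x = y] (mod B * A)"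
  shows "[x div B = y div B] (mod A)"
proof (cases "B = 0")
  case False
  obtain x' y' where xy: "x = B * x'" "y = B * y'"
    using assms(1,2) by (auto elim!: dvdE)
  have "B * A dvd B * (x' - y')"
    using assms(3) unfolding xy cong_iff_dvd_diff by (simp add: right_diff_distrib)
  then show ?thesis
    using False unfolding xy cong_iff_dvd_diff by simp
qed (use assms(3) in simp)

text \<open>Elimination with the unit \<open>u\<close> reduces the kernel condition at level \<open>a + b\<close> to
  \<open>l ^ b\<close> dividing \<open>u U + q W\<close>, so \<open>(U, W) \<mapsto> ((u U + q W) / l ^ b mod l ^ a, W)\<close>
  identifies the kernel with \<open>Z/l^a \<times> Z/l^(a+b)\<close>.\<close>

locale reduced_matrix = zl_matrix +
  fixes a b :: nat and u q r s :: int
  assumes prime_l: "prime l"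
    and entries_at: "\<alpha> (Suc (2 * a + b)) = int l ^ a * u" "\<beta> (Suc (2 * a + b)) = int l ^ a * q"
      "\<gamma> (Suc (2 * a + b)) = int l ^ a * r" "\<delta> (Suc (2 * a + b)) = int l ^ a * s"
    and u_unit: "\<not> int l dvd u"
    and det_dvd: "int l ^ b dvd u * s - q * r"
    and det_not_dvd: "\<not> int l ^ Suc b dvd u * s - q * r"
begin

lemma prime_int_l: "prime (int l)"
  using prime_l by simp

lemma coprime_u: "coprime u (int l ^ k)"
  using prime_imp_power_coprime_int[OF prime_int_l u_unit] .

lemma kills_iff_reduced:
  assumes "m \<le> Suc (2 * a + b)"
  shows "kills l \<alpha> \<beta> \<gamma> \<delta> m U W
    \<longleftrightarrow> int l ^ m dvd int l ^ a * (u * U + q * W) \<and> int l ^ m dvd int l ^ a * (r * U + s * W)"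
  using kills_le[OF assms, of U W] entries_at by (simp add: kills_def algebra_simps)

lemma dvd_second_row:
  assumes "int l ^ k dvd u * U + q * W" "k \<le> b"
  shows "int l ^ k dvd r * U + s * W"
proof -
  have "u * (r * U + s * W) = r * (u * U + q * W) + (u * s - q * r) * W"
    by (simp add: algebra_simps)
  moreover have "int l ^ k dvd u * s - q * r"
    using det_dvd assms(2) by (meson dvd_trans le_imp_power_dvd)
  ultimately have "int l ^ k dvd u * (r * U + s * W)"
    using assms(1) by simp
  then show ?thesis
    using coprime_u coprime_dvd_mult_right_iff by (metis coprime_commute)
qed

lemma kills_ab_iff: "kills l \<alpha> \<beta> \<gamma> \<delta> (a + b) U W \<longleftrightarrow> int l ^ b dvd u * U + q * W"
proof -
  have "int l ^ (a + b) dvd int l ^ a * X \<longleftrightarrow> int l ^ b dvd X" for X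
    using l_pos by (simp add: power_add)
  then show ?thesis
    using kills_iff_reduced[of "a + b"] dvd_second_row by auto
qed

lemma kills_Suc_ab_dvd:
  assumes "kills l \<alpha> \<beta> \<gamma> \<delta> (Suc (a + b)) U W"
  shows "int l dvd U" "int l dvd W"
proof -
  have "int l ^ Suc (a + b) dvd int l ^ a * X \<longleftrightarrow> int l ^ Suc b dvd X" for X
    using l_pos by (simp add: power_add)
  then have d1: "int l ^ Suc b dvd u * U + q * W" and d2: "int l ^ Suc b dvd r * U + s * W"
    using assms kills_iff_reduced[of "Suc (a + b)"] by auto
  have "(u * s - q * r) * W = u * (r * U + s * W) - r * (u * U + q * W)"
    by (simp add: algebra_simps)
  then have dW: "int l ^ Suc b dvd (u * s - q * r) * W"
    using d1 d2 by simp
  obtain e where e: "u * s - q * r = int l ^ b * e"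
    using det_dvd by (auto elim!: dvdE)
  have "\<not> int l dvd e"
    using det_not_dvd unfolding e by simp
  moreover have "int l dvd e * W"
    using dW l_pos unfolding e by (simp add: mult.assoc)
  ultimately show W: "int l dvd W"
    using prime_dvd_mult_iff[OF prime_int_l] by blast
  have "int l dvd int l ^ Suc b"
    by simp
  then have "int l dvd u * U + q * W"
    using d1 by (rule dvd_trans)
  then have "int l dvd u * U"
    using W by (metis dvd_add_left_iff dvd_mult)
  then show "int l dvd U"
    using u_unit prime_dvd_mult_iff[OF prime_int_l] by blast
qed

lemma vlevel_le_ab: "v \<in> K \<Longrightarrow> vlevel l v \<le> a + b"
proof (rule vlevel_le_of_step)
  fix w
  assume w: "w \<in> K" and lw: "vlevel l w \<le> Suc (a + b)"
  have wt: "w \<in> Tl l \<times> Tl l"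
    using w tker_Tl by blast
  have "kills l \<alpha> \<beta> \<gamma> \<delta> (Suc (a + b)) (numer_at l (Suc (a + b)) (fst w)) (numer_at l (Suc (a + b)) (snd w))"
    using tker_iff[OF wt lw] w by blast
  then show "vlevel l w \<le> a + b"
    using kills_Suc_ab_dvd vlevel_le_iff[OF wt l_pos] killed_by_Suc_dvd[OF l_pos] lw by blast
qed

lemma killed_by_ab:
  assumes "v \<in> K"
  shows "killed_by l (a + b) (fst v)" "killed_by l (a + b) (snd v)"
  using vlevel_le_ab[OF assms] vlevel_le_iff[of v l] assms tker_Tl[of l \<alpha> \<beta> \<gamma> \<delta>] l_pos by blast+

abbreviation row :: "rat \<times> rat \<Rightarrow> int" where
  "row v \<equiv> u * numer_at l (a + b) (fst v) + q * numer_at l (a + b) (snd v)"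

lemma tker_row_dvd:
  assumes "v \<in> K"
  shows "int l ^ b dvd row v"
  using tker_iff[of v "a + b"] assms tker_Tl vlevel_le_ab kills_ab_iff by blast

definition coords :: "rat \<times> rat \<Rightarrow> int \<times> int" where
  "coords v = (row v div int l ^ b mod int l ^ a, numer_at l (a + b) (snd v))"

lemma coords_carrier:
  assumes "v \<in> K"
  shows "coords v \<in> carrier (Zmod_pair l a b)"
proof -
  have "snd v \<in> Tl l"
    using assms tker_Tl[of l \<alpha> \<beta> \<gamma> \<delta>] by auto
  then show ?thesis
    using numer_at_bounds[of "snd v" l "a + b"] l_pos
    by (auto simp: coords_def carrier_integer_mod_group)
qed

lemma coords_add:
  assumes v: "v \<in> K" and w: "w \<in> K"
  shows "coords (frac (fst v + fst w), frac (snd v + snd w)) = coords v \<otimes>\<^bsub>Zmod_pair l a b\<^esub> coords w"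
proof -
  define x where "x = (frac (fst v + fst w), frac (snd v + snd w))"
  define P where "P = int l ^ (a + b)"
  note kv = killed_by_ab[OF v] and kw = killed_by_ab[OF w]
  have nx: "numer_at l (a + b) (fst x) = (numer_at l (a + b) (fst v) + numer_at l (a + b) (fst w)) mod P"
    "numer_at l (a + b) (snd x) = (numer_at l (a + b) (snd v) + numer_at l (a + b) (snd w)) mod P"
    using numer_at_frac_add[OF l_pos kv(1) kw(1)] numer_at_frac_add[OF l_pos kv(2) kw(2)]
    by (simp_all add: x_def P_def)
  have "[row x = u * (numer_at l (a + b) (fst v) + numer_at l (a + b) (fst w))
      + q * (numer_at l (a + b) (snd v) + numer_at l (a + b) (snd w))] (mod P)"
    unfolding nx by (intro cong_add cong_mult cong_refl) (simp_all add: cong_def)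
  also have "u * (numer_at l (a + b) (fst v) + numer_at l (a + b) (fst w))
      + q * (numer_at l (a + b) (snd v) + numer_at l (a + b) (snd w)) = row v + row w"
    by (simp add: algebra_simps)
  finally have "[row x = row v + row w] (mod int l ^ b * int l ^ a)"
    unfolding P_def by (simp add: power_add mult.commute)
  then have "[row x div int l ^ b = (row v + row w) div int l ^ b] (mod int l ^ a)"
    using tker_row_dvd[OF tker_add[OF v w]] tker_row_dvd[OF v] tker_row_dvd[OF w]
    by (intro div_cong_of_dvd) (simp_all add: x_def)
  moreover have "(row v + row w) div int l ^ b = row v div int l ^ b + row w div int l ^ b"
    using tker_row_dvd[OF v] tker_row_dvd[OF w] by simp
  ultimately show ?thesis
    by (simp add: coords_def cong_def mod_simps x_def[symmetric] nx(2) P_def)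
qed

lemma coords_inj: "inj_on coords K"
proof (rule inj_onI)
  fix v w
  assume v: "v \<in> K" and w: "w \<in> K" and eq: "coords v = coords w"
  define P where "P = int l ^ (a + b)"
  define U1 U2 W where "U1 = numer_at l (a + b) (fst v)" and "U2 = numer_at l (a + b) (fst w)"
    and "W = numer_at l (a + b) (snd v)"
  have vt: "v \<in> Tl l \<times> Tl l" and wt: "w \<in> Tl l \<times> Tl l"
    using v w tker_Tl by blast+
  note kv = killed_by_ab[OF v] and kw = killed_by_ab[OF w]
  have W: "numer_at l (a + b) (snd w) = W"
    using eq by (simp add: coords_def W_def)
  have "int l ^ a dvd row v div int l ^ b - row w div int l ^ b"
    using eq unfolding coords_def prod.inject mod_eq_dvd_iff by (rule conjunct1)
  then have "int l ^ b * int l ^ a dvd int l ^ b * (row v div int l ^ b - row w div int l ^ b)"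
    by (rule mult_dvd_mono[OF dvd_refl])
  also have "int l ^ b * (row v div int l ^ b - row w div int l ^ b) = row v - row w"
    using tker_row_dvd[OF v] tker_row_dvd[OF w] by (simp add: right_diff_distrib)
  also have "row v - row w = u * (U1 - U2)"
    using W by (simp add: U1_def U2_def W_def algebra_simps)
  finally have "P dvd u * (U1 - U2)"
    by (simp add: P_def power_add mult.commute)
  then have "P dvd U1 - U2"
    using coprime_dvd_mult_right_iff[of P u] coprime_u coprime_commute unfolding P_def by metis
  moreover have "0 \<le> U1" "U1 < P" "0 \<le> U2" "U2 < P"
    using numer_at_bounds[of "fst v" l "a + b"] numer_at_bounds[of "fst w" l "a + b"] vt wt l_pos
    by (auto simp: U1_def U2_def P_def)
  ultimately have "U1 = U2"
    by (metis cong_iff_dvd_diff cong_def mod_pos_pos_trivial)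
  then show "v = w"
    using numer_at_divide[OF l_pos kv(1)] numer_at_divide[OF l_pos kv(2)]
      numer_at_divide[OF l_pos kw(1)] numer_at_divide[OF l_pos kw(2)] W
    unfolding U1_def U2_def W_def by (metis prod_eqI)
qed

lemma coords_surj:
  assumes "y \<in> carrier (Zmod_pair l a b)"
  shows "y \<in> coords ` K"
proof -
  define P B where "P = int l ^ (a + b)" and "B = int l ^ b"
  obtain t W where y: "y = (t, W)" "0 \<le> t" "t < int l ^ a" "0 \<le> W" "W < P"
    using assms l_pos by (cases y) (auto simp: carrier_integer_mod_group P_def)
  have pos: "B > 0" "P > 0"
    using l_pos by (simp_all add: B_def P_def)
  have P: "P = B * int l ^ a"
    by (simp add: P_def B_def power_add)
  obtain u' where u': "[u * u' = 1] (mod P)"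
    using cong_solve_coprime_int[OF coprime_u] unfolding P_def by blast
  define U where "U = (u' * (B * t - q * W)) mod P"
  have "[u * U = u * u' * (B * t - q * W)] (mod P)"
    unfolding U_def by (simp add: cong_def mod_simps mult.assoc)
  moreover have "[u * u' * (B * t - q * W) = 1 * (B * t - q * W)] (mod P)"
    by (intro cong_mult u' cong_refl)
  ultimately have "[u * U + q * W = (B * t - q * W) + q * W] (mod P)"
    by (intro cong_add cong_refl) (auto intro: cong_trans)
  then have X: "[u * U + q * W = B * t] (mod B * int l ^ a)"
    by (simp add: P)
  then have "B dvd u * U + q * W"
    by (metis cong_dvd_iff cong_dvd_modulus dvd_triv_left)
  moreover have U: "0 \<le> U" "U < P"
    using pos by (simp_all add: U_def)
  ultimately have "(of_int (U mod P) / of_nat (l ^ (a + b)), of_int (W mod P) / of_nat (l ^ (a + b))) \<in> K"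
    using tker_of_numer kills_ab_iff unfolding P_def B_def by blast
  moreover have "coords (of_int U / of_nat (l ^ (a + b)), of_int W / of_nat (l ^ (a + b))) = y"
  proof -
    have "[(u * U + q * W) div B = B * t div B] (mod int l ^ a)"
      using X \<open>B dvd u * U + q * W\<close> by (intro div_cong_of_dvd) simp_all
    then show ?thesis
      using Tl_of_numer(3)[OF U(1) U(2)[unfolded P_def] l_pos]
        Tl_of_numer(3)[OF y(4) y(5)[unfolded P_def] l_pos] l_pos y
      by (simp add: coords_def cong_def B_def)
  qed
  ultimately show ?thesis
    using U y pos by (metis image_eqI mod_pos_pos_trivial)
qed

lemma tgrp_iso: "tgrp K \<cong> Zmod_pair l a b"
proof -
  have "coords \<in> hom (tgrp K) (Zmod_pair l a b)"
    unfolding hom_def tgrp_def using coords_carrier coords_add by (simp add: Pi_iff)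
  moreover have "coords ` K = carrier (Zmod_pair l a b)"
    using coords_carrier coords_surj by blast
  ultimately have "coords \<in> iso (tgrp K) (Zmod_pair l a b)"
    using coords_inj by (simp add: iso_def bij_betw_def tgrp_def)
  then show ?thesis
    unfolding is_iso_def by blast
qed

end

lemma tker_swap_rows: "tker l \<gamma> \<delta> \<alpha> \<beta> = tker l \<alpha> \<beta> \<gamma> \<delta>"
  unfolding tker_def kills_def by blast

lemma tker_swap_cols: "tker l \<alpha> \<beta> \<gamma> \<delta> = prod.swap ` tker l \<beta> \<alpha> \<delta> \<gamma>"
proof -
  have "v \<in> tker l \<alpha> \<beta> \<gamma> \<delta> \<longleftrightarrow> prod.swap v \<in> tker l \<beta> \<alpha> \<delta> \<gamma>" for v
  proof (cases v)
    case (Pair x y)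
    have "vlevel l (y, x) = vlevel l (x, y)"
      by (simp add: vlevel_def max.commute)
    then show ?thesis
      unfolding Pair tker_def kills_def by (simp add: ac_simps)
  qed
  then show ?thesis
    by (auto intro: image_eqI[where x = "prod.swap v" for v])
qed

lemma tgrp_swap_iso: "tgrp (prod.swap ` S) \<cong> tgrp S"
proof -
  have "prod.swap \<in> iso (tgrp (prod.swap ` S)) (tgrp S)"
    by (auto simp: iso_def hom_def bij_betw_def tgrp_def inj_on_def image_image)
  then show ?thesis
    unfolding is_iso_def by blast
qed

lemma tgrp_tker_iso_of_reduced:
  assumes A: "zl_matrix l \<alpha> \<beta> \<gamma> \<delta>" and l: "prime l"
    and E: "\<alpha> (Suc (2 * a + b)) = int l ^ a * u" "\<beta> (Suc (2 * a + b)) = int l ^ a * q"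
      "\<gamma> (Suc (2 * a + b)) = int l ^ a * r" "\<delta> (Suc (2 * a + b)) = int l ^ a * s"
    and unit: "\<not> int l dvd u \<or> \<not> int l dvd q \<or> \<not> int l dvd r \<or> \<not> int l dvd s"
    and D: "int l ^ b dvd u * s - q * r" "\<not> int l ^ Suc b dvd u * s - q * r"
  shows "tgrp (tker l \<alpha> \<beta> \<gamma> \<delta>) \<cong> Zmod_pair l a b"
proof -
  have Z: "l > 0" "\<alpha> \<in> Zl l" "\<beta> \<in> Zl l" "\<gamma> \<in> Zl l" "\<delta> \<in> Zl l"
    using A by (simp_all add: zl_matrix_def)
  have neg: "x dvd p * s' - q' * r' \<longleftrightarrow> x dvd q' * r' - p * s'" for x p q' r' s' :: int
    by (metis dvd_minus_iff minus_diff_eq)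
  consider "\<not> int l dvd u" | "\<not> int l dvd q" | "\<not> int l dvd r" | "\<not> int l dvd s"
    using unit by blast
  then show ?thesis
  proof cases
    case 1
    then interpret R: reduced_matrix l \<alpha> \<beta> \<gamma> \<delta> a b u q r s
      using E D l Z by unfold_locales
    show ?thesis by (rule R.tgrp_iso)
  next
    case 2
    then interpret R: reduced_matrix l \<beta> \<alpha> \<delta> \<gamma> a b q u s r
      using E D l Z by unfold_locales (simp_all add: neg mult.commute)
    show ?thesis
      using R.tgrp_iso tgrp_swap_iso iso_trans tker_swap_cols by metis
  next
    case 3
    then interpret R: reduced_matrix l \<gamma> \<delta> \<alpha> \<beta> a b r s u q
      using E D l Z by unfold_locales (simp_all add: neg mult.commute)
    show ?thesis
      using R.tgrp_iso tker_swap_rows by metis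
  next
    case 4
    then interpret R: reduced_matrix l \<delta> \<gamma> \<beta> \<alpha> a b s r q u
      using E D l Z by unfold_locales (simp_all add: mult.commute)
    show ?thesis
      using R.tgrp_iso tgrp_swap_iso iso_trans tker_swap_cols tker_swap_rows by metis
  qed
qed

lemma exact_power_dvd:
  fixes x :: int
  assumes "prime p" "x \<noteq> 0"
  obtains a where "p ^ a dvd x" "\<not> p ^ Suc a dvd x"
proof
  have "\<not> is_unit p"
    using assms(1) not_prime_unit by blast
  note iff = power_dvd_iff_le_multiplicity[OF assms(2) this]
  show "p ^ multiplicity p x dvd x" "\<not> p ^ Suc (multiplicity p x) dvd x"
    using iff[of "multiplicity p x"] iff[of "Suc (multiplicity p x)"] by simp_all
qed

lemma exact_power_dvd_at_level:
  fixes D :: "nat \<Rightarrow> int"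
  assumes "prime l" and coherent: "\<And>k m. k \<le> m \<Longrightarrow> [D m = D k] (mod int l ^ k)"
    and "\<not> int l ^ N dvd D N"
  obtains d where "int l ^ d dvd D (Suc d)" "\<not> int l ^ Suc d dvd D (Suc d)"
proof -
  have "D N \<noteq> 0"
    using assms(3) by auto
  then obtain d where d: "int l ^ d dvd D N" "\<not> int l ^ Suc d dvd D N"
    using exact_power_dvd[of "int l"] assms(1) by auto
  have "Suc d \<le> N"
  proof (rule ccontr)
    assume "\<not> Suc d \<le> N"
    then have "int l ^ N dvd int l ^ d"
      by (intro le_imp_power_dvd) simp
    then show False
      using d(1) assms(3) dvd_trans by blast
  qed
  then have c: "[D N = D (Suc d)] (mod int l ^ Suc d)"
    by (rule coherent)
  then have "[D N = D (Suc d)] (mod int l ^ d)"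
    by (rule cong_dvd_modulus) (simp add: le_imp_power_dvd)
  then show ?thesis
    using that d cong_dvd_iff[OF c] cong_dvd_iff by blast
qed

lemma exact_power_factor4:
  fixes x1 x2 x3 x4 :: int
  assumes "prime p" "x1 \<noteq> 0 \<or> x2 \<noteq> 0 \<or> x3 \<noteq> 0 \<or> x4 \<noteq> 0"
  obtains a y1 y2 y3 y4 where "x1 = p ^ a * y1" "x2 = p ^ a * y2" "x3 = p ^ a * y3" "x4 = p ^ a * y4"
    and "\<not> p dvd y1 \<or> \<not> p dvd y2 \<or> \<not> p dvd y3 \<or> \<not> p dvd y4"
proof -
  define g where "g = gcd (gcd x1 x2) (gcd x3 x4)"
  have "g \<noteq> 0"
    using assms(2) by (auto simp: g_def)
  then obtain a where a: "p ^ a dvd g" "\<not> p ^ Suc a dvd g"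
    using exact_power_dvd[OF assms(1)] by blast
  have "p ^ a dvd x1" "p ^ a dvd x2" "p ^ a dvd x3" "p ^ a dvd x4"
    using a(1) unfolding g_def by (meson dvd_trans gcd_dvd1 gcd_dvd2)+
  then obtain y1 y2 y3 y4 where y: "x1 = p ^ a * y1" "x2 = p ^ a * y2" "x3 = p ^ a * y3" "x4 = p ^ a * y4"
    by (metis dvdE)
  have "\<not> (p dvd y1 \<and> p dvd y2 \<and> p dvd y3 \<and> p dvd y4)"
  proof
    assume "p dvd y1 \<and> p dvd y2 \<and> p dvd y3 \<and> p dvd y4"
    then have "p ^ Suc a dvd g"
      unfolding g_def y by (simp add: mult_dvd_mono mult.commute)
    then show False
      using a(2) by blast
  qed
  then show ?thesis
    using that y by blast
qed

lemma det_exact_power_factor: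
  fixes x1 x2 x3 x4 :: int
  assumes p: "prime p" and D: "p ^ d dvd x1 * x4 - x2 * x3" "\<not> p ^ Suc d dvd x1 * x4 - x2 * x3"
  obtains a b y1 y2 y3 y4 where "d = 2 * a + b"
    "x1 = p ^ a * y1" "x2 = p ^ a * y2" "x3 = p ^ a * y3" "x4 = p ^ a * y4"
    "\<not> p dvd y1 \<or> \<not> p dvd y2 \<or> \<not> p dvd y3 \<or> \<not> p dvd y4"
    "p ^ b dvd y1 * y4 - y2 * y3" "\<not> p ^ Suc b dvd y1 * y4 - y2 * y3"
proof -
  have "x1 \<noteq> 0 \<or> x2 \<noteq> 0 \<or> x3 \<noteq> 0 \<or> x4 \<noteq> 0"
    using D(2) by auto
  then obtain a y1 y2 y3 y4 where x: "x1 = p ^ a * y1" "x2 = p ^ a * y2" "x3 = p ^ a * y3"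
      "x4 = p ^ a * y4" and unit: "\<not> p dvd y1 \<or> \<not> p dvd y2 \<or> \<not> p dvd y3 \<or> \<not> p dvd y4"
    using exact_power_factor4[OF p] by blast
  have "x1 * x4 - x2 * x3 = p ^ a * p ^ a * (y1 * y4 - y2 * y3)"
    by (simp add: x algebra_simps)
  then have det: "x1 * x4 - x2 * x3 = p ^ (2 * a) * (y1 * y4 - y2 * y3)"
    by (simp add: mult_2 power_add)
  have "2 * a \<le> d"
  proof (rule ccontr)
    assume "\<not> 2 * a \<le> d"
    then have "p ^ Suc d dvd p ^ (2 * a)"
      by (intro le_imp_power_dvd) simp
    then show False
      using D(2) unfolding det by (metis dvd_mult2)
  qed
  define b where "b = d - 2 * a"
  have d: "d = 2 * a + b"
    using \<open>2 * a \<le> d\<close> by (simp add: b_def)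
  have p2a: "p ^ (2 * a) \<noteq> 0"
    using p by simp
  have pw: "p ^ d = p ^ (2 * a) * p ^ b" "p ^ Suc d = p ^ (2 * a) * p ^ Suc b"
    unfolding d by (simp_all add: power_add)
  have "p ^ b dvd y1 * y4 - y2 * y3"
    using D(1) unfolding det pw dvd_times_left_cancel_iff[OF p2a] .
  moreover have "\<not> p ^ Suc b dvd y1 * y4 - y2 * y3"
    using D(2) unfolding det pw dvd_times_left_cancel_iff[OF p2a] .
  ultimately show ?thesis
    using that d x unit by blast
qed

lemma kergrp_iso_of_det_nonzero:
  assumes l: "prime l" and M: "M \<in> Mat2 l" and E: "msub l M (mid l) = (\<alpha>, \<beta>, \<gamma>, \<delta>)"
    and nonsing: "\<not> (\<forall>n. int l ^ n dvd \<alpha> n * \<delta> n - \<beta> n * \<gamma> n)"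
  shows "\<exists>a b. kergrp l M \<cong> Zmod_pair l a b"
proof -
  have l_pos: "l > 0"
    using l prime_gt_0_nat by blast
  interpret zl_matrix l \<alpha> \<beta> \<gamma> \<delta>
    by (rule zl_matrix_msub_mid[OF l_pos M E])
  define D where "D n = \<alpha> n * \<delta> n - \<beta> n * \<gamma> n" for n
  have coherent: "[D m = D k] (mod int l ^ k)" if "k \<le> m" for k m
    unfolding D_def using that by (intro cong_diff cong_mult Zl_cong_le entries_Zl)
  obtain N where "\<not> int l ^ N dvd D N"
    using nonsing unfolding D_def by blast
  then obtain d where DL: "int l ^ d dvd D (Suc d)" "\<not> int l ^ Suc d dvd D (Suc d)"
    using exact_power_dvd_at_level[OF l coherent] by blast
  have "prime (int l)"
    using l by simp
  then obtain a b u q r s where "d = 2 * a + b"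
    "\<alpha> (Suc d) = int l ^ a * u" "\<beta> (Suc d) = int l ^ a * q"
    "\<gamma> (Suc d) = int l ^ a * r" "\<delta> (Suc d) = int l ^ a * s"
    "\<not> int l dvd u \<or> \<not> int l dvd q \<or> \<not> int l dvd r \<or> \<not> int l dvd s"
    "int l ^ b dvd u * s - q * r" "\<not> int l ^ Suc b dvd u * s - q * r"
    using DL unfolding D_def by (rule det_exact_power_factor)
  then have "tgrp (tker l \<alpha> \<beta> \<gamma> \<delta>) \<cong> Zmod_pair l a b"
    using tgrp_tker_iso_of_reduced[OF zl_matrix_axioms l] by blast
  then show ?thesis
    using kerMI_eq_tker[OF l_pos E] by (auto simp: kergrp_eq_tgrp)
qed

section \<open>Haar measure of reduction fibres\<close>

definition fibre :: "mat2 set \<Rightarrow> nat \<Rightarrow> int \<times> int \<times> int \<times> int \<Rightarrow> mat2 set" where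
  "fibre G n t = {N \<in> G. red N n = t}"

locale haar_group =
  fixes l :: nat and G :: "mat2 set" and \<mu> :: "mat2 measure"
  assumes prime_l: "prime l" and subgroup_G: "subgroup G (GL2grp l)" and haar: "haar_prob l G \<mu>"
begin

lemma l_pos: "l > 0"
  using prime_l prime_gt_0_nat by blast

lemma G_Mat2: "G \<subseteq> Mat2 l"
  using subgroup.subset[OF subgroup_G] GL2_Mat2 by auto

lemma mid_in_G: "mid l \<in> G"
  using subgroup.one_closed[OF subgroup_G] by simp

sublocale prob_space \<mu>
  using haar by (simp add: haar_prob_def)

lemma space_eq: "space \<mu> = G"
  using haar by (simp add: haar_prob_def)

lemma fibre_sets: "fibre G n t \<in> sets \<mu>"
proof -
  have "lopen l {N \<in> Mat2 l. red N n = t}"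
    unfolding lopen_def by auto
  then have "lopen_in l G (fibre G n t)"
    unfolding lopen_in_def fibre_def using G_Mat2 by blast
  then show ?thesis
    using haar by (auto simp: haar_prob_def intro: sigma_sets.Basic)
qed

lemma translate_fibre_one:
  assumes M: "M \<in> G"
  shows "mmul l M ` fibre G n (red (mid l) n) = fibre G n (red M n)"
proof (intro equalityI subsetI)
  fix y
  assume "y \<in> mmul l M ` fibre G n (red (mid l) n)"
  then obtain x where x: "x \<in> G" "red x n = red (mid l) n" and y: "y = mmul l M x"
    by (auto simp: fibre_def)
  have "red y n = red (mmul l M (mid l)) n"
    unfolding y by (rule red_mmul_right[OF x(2)])
  also have "\<dots> = red M n"
    using mmul_mid_right M G_Mat2 by (metis subsetD)
  finally show "y \<in> fibre G n (red M n)"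
    using subgroup.m_closed[OF subgroup_G M x(1)] y by (simp add: fibre_def)
next
  fix y
  assume "y \<in> fibre G n (red M n)"
  then have y: "y \<in> G" "red y n = red M n"
    by (auto simp: fibre_def)
  define M' where "M' = inv\<^bsub>GL2grp l\<^esub> M"
  have M'G: "M' \<in> G"
    unfolding M'_def using subgroup.m_inv_closed[OF subgroup_G M] .
  have MGL: "M \<in> carrier (GL2grp l)"
    using M subgroup.subset[OF subgroup_G] by auto
  have inv: "mmul l M' M = mid l" "mmul l M M' = mid l"
    unfolding M'_def using group.l_inv[OF group_GL2grp[OF l_pos] MGL]
      group.r_inv[OF group_GL2grp[OF l_pos] MGL] by simp_all
  define x where "x = mmul l M' y"
  have "x \<in> G"
    unfolding x_def using subgroup.m_closed[OF subgroup_G M'G y(1)] by simp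
  moreover have "red x n = red (mid l) n"
    using red_mmul_right[OF y(2), of l M'] inv(1) by (simp add: x_def)
  moreover have "mmul l M x = mmul l (mmul l M M') y"
    by (simp add: x_def mmul_assoc)
  then have "mmul l M x = y"
    using inv(2) mmul_mid_left y(1) G_Mat2 by (metis subsetD)
  ultimately show "y \<in> mmul l M ` fibre G n (red (mid l) n)"
    by (force simp: fibre_def)
qed

lemma measure_fibre:
  assumes "t \<in> img G n"
  shows "measure \<mu> (fibre G n t) = measure \<mu> (fibre G n (red (mid l) n))"
proof -
  obtain M where M: "M \<in> G" "t = red M n"
    using assms by (auto simp: img_def)
  have "emeasure \<mu> (mmul l M ` fibre G n (red (mid l) n)) = emeasure \<mu> (fibre G n (red (mid l) n))"
    using haar M(1) fibre_sets unfolding haar_prob_def by blast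
  then show ?thesis
    using translate_fibre_one[OF M(1)] M(2) by (simp add: measure_def)
qed

lemma measure_red_saturated:
  assumes X: "X \<subseteq> G" and sat: "\<And>M N. M \<in> X \<Longrightarrow> N \<in> G \<Longrightarrow> red N n = red M n \<Longrightarrow> N \<in> X"
  shows "X \<in> sets \<mu>" "measure \<mu> X = real (card (img X n)) / real (card (img G n))"
proof -
  have union: "Y = (\<Union>t\<in>img Y n. fibre G n t)"
    if "Y \<subseteq> G" "\<And>M N. M \<in> Y \<Longrightarrow> N \<in> G \<Longrightarrow> red N n = red M n \<Longrightarrow> N \<in> Y" for Y
    using that by (auto simp: img_def fibre_def)
  have measure: "measure \<mu> Y = real (card (img Y n)) * measure \<mu> (fibre G n (red (mid l) n))"
    if "Y \<subseteq> G" "\<And>M N. M \<in> Y \<Longrightarrow> N \<in> G \<Longrightarrow> red N n = red M n \<Longrightarrow> N \<in> Y" for Y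
  proof -
    have "measure \<mu> Y = measure \<mu> (\<Union>t\<in>img Y n. fibre G n t)"
      using union[OF that] by (rule arg_cong)
    also have "\<dots> = (\<Sum>t\<in>img Y n. measure \<mu> (fibre G n t))"
      by (rule finite_measure_finite_Union)
        (use finite_img[of Y l n] G_Mat2 that(1) fibre_sets in \<open>auto simp: disjoint_family_on_def fibre_def\<close>)
    also have "\<dots> = (\<Sum>t\<in>img Y n. measure \<mu> (fibre G n (red (mid l) n)))"
      using that(1) by (intro sum.cong refl measure_fibre) (auto simp: img_def)
    finally show ?thesis
      by simp
  qed
  have "(\<Union>t\<in>img X n. fibre G n t) \<in> sets \<mu>"
    using finite_img[of X l n] G_Mat2 X fibre_sets by auto
  then show "X \<in> sets \<mu>"
    using union[OF assms] by simp
  have "real (card (img G n)) * measure \<mu> (fibre G n (red (mid l) n)) = 1"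
    using measure[of G] prob_space space_eq by simp
  then have "measure \<mu> (fibre G n (red (mid l) n)) = 1 / real (card (img G n))"
    by (metis mult_eq_0_iff nonzero_eq_divide_eq mult.commute zero_neq_one)
  then show "measure \<mu> X = real (card (img X n)) / real (card (img G n))"
    using measure[OF X sat] by simp
qed

lemma Mab_measure:
  assumes "a + b < n"
  shows "Mab l G a b \<in> sets \<mu>" "measure \<mu> (Mab l G a b) = mu_n l G a b n"
  using measure_red_saturated[of "Mab l G a b" n] Mab_red_closed[OF l_pos G_Mat2 _ _ _ assms]
  by (auto simp: Mab_def mu_n_def)

lemma measure_Mab_eq_0_iff: "measure \<mu> (Mab l G a b) = 0 \<longleftrightarrow> Mab l G a b = {}"
proof -
  have "card (img G (Suc (a + b))) > 0"
    using finite_img[OF G_Mat2] mid_in_G by (auto simp: img_def card_gt_0_iff)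
  moreover have "finite (img (Mab l G a b) (Suc (a + b)))"
    using G_Mat2 by (intro finite_img) (auto simp: Mab_def)
  ultimately show ?thesis
    using Mab_measure(2)[of a b "Suc (a + b)"] by (simp add: mu_n_def img_def)
qed

end

section \<open>The matrices with eigenvalue one form a null set\<close>

definition eigenvalue :: "nat \<Rightarrow> mat2 \<Rightarrow> int \<Rightarrow> bool" where
  "eigenvalue l X c \<longleftrightarrow>
     (case X of (p, q, r, s) \<Rightarrow> \<forall>n. int l ^ n dvd (p n - c) * (s n - c) - q n * r n)"

lemma at_most_two_eigenvalues:
  assumes "l \<ge> 2" "x \<noteq> y" "x \<noteq> z" "y \<noteq> z"
    and "eigenvalue l X x" "eigenvalue l X y" "eigenvalue l X z"
  shows False
proof -
  obtain p q r s where X: "X = (p, q, r, s)"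
    by (cases X)
  define c where "c = (x - y) * (x - z) * (y - z)"
  have "c \<noteq> 0"
    using assms(2-4) by (simp add: c_def)
  have "int l ^ n dvd c" for n
  proof -
    define f where "f t = (p n - t) * (s n - t) - q n * r n" for t
    have f: "int l ^ n dvd f x" "int l ^ n dvd f y" "int l ^ n dvd f z"
      using assms(5-7) by (simp_all add: eigenvalue_def X f_def)
    have "c = (x - z) * (f x - f y) - (x - y) * (f x - f z)"
      by (simp add: c_def f_def algebra_simps)
    then show ?thesis
      using f by simp
  qed
  then have "\<bar>int l ^ nat \<bar>c\<bar>\<bar> \<le> \<bar>c\<bar>"
    using dvd_imp_le_int[OF \<open>c \<noteq> 0\<close>] by blast
  moreover have "int (nat \<bar>c\<bar>) < 2 ^ nat \<bar>c\<bar>"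
    by (metis less_exp of_nat_less_iff of_nat_numeral of_nat_power)
  moreover have "(2::int) ^ nat \<bar>c\<bar> \<le> int l ^ nat \<bar>c\<bar>"
    using assms(1) by (simp add: power_mono)
  ultimately show False
    by simp
qed

definition smat :: "nat \<Rightarrow> zl \<Rightarrow> mat2" where
  "smat l x = (x, zconst l 0, zconst l 0, x)"

lemma smat_Mat2: "l > 0 \<Longrightarrow> x \<in> Zl l \<Longrightarrow> smat l x \<in> Mat2 l"
  by (simp add: smat_def Mat2_def zconst_Zl)

lemma mmul_smat_left: "mmul l (smat l x) (a, b, c, d) = (zmul l x a, zmul l x b, zmul l x c, zmul l x d)"
  by (simp add: smat_def mmul_def zadd_def zmul_def zconst_def fun_eq_iff)

lemma mmul_smat_right: "mmul l (a, b, c, d) (smat l x) = (zmul l a x, zmul l b x, zmul l c x, zmul l d x)"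
  by (simp add: smat_def mmul_def zadd_def zmul_def zconst_def fun_eq_iff)

lemma mmul_smat_commute: "mmul l (smat l x) A = mmul l A (smat l x)"
  by (cases A) (simp add: mmul_smat_left mmul_smat_right zmul_def mult.commute)

lemma eigenvalue_smat_mmul:
  assumes "eigenvalue l M x"
  shows "eigenvalue l (mmul l (smat l (zconst l c)) M) (c * x)"
proof -
  obtain p q r s where M: "M = (p, q, r, s)"
    by (cases M)
  have "int l ^ n dvd ((c mod int l ^ n * p n) mod int l ^ n - c * x) * ((c mod int l ^ n * s n) mod int l ^ n - c * x)
      - (c mod int l ^ n * q n) mod int l ^ n * ((c mod int l ^ n * r n) mod int l ^ n)" for n
  proof -
    have "[((c mod int l ^ n * p n) mod int l ^ n - c * x) * ((c mod int l ^ n * s n) mod int l ^ n - c * x)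
        - (c mod int l ^ n * q n) mod int l ^ n * ((c mod int l ^ n * r n) mod int l ^ n)
      = (c * p n - c * x) * (c * s n - c * x) - (c * q n) * (c * r n)] (mod int l ^ n)"
      by (intro cong_diff cong_mult cong_refl) (simp_all add: cong_def mod_simps)
    moreover have "(c * p n - c * x) * (c * s n - c * x) - (c * q n) * (c * r n)
        = c * c * ((p n - x) * (s n - x) - q n * r n)"
      by (simp add: algebra_simps)
    moreover have "int l ^ n dvd (p n - x) * (s n - x) - q n * r n"
      using assms by (simp add: eigenvalue_def M)
    ultimately show ?thesis
      by (simp add: cong_dvd_iff)
  qed
  then show ?thesis
    by (simp add: eigenvalue_def M mmul_smat_left zmul_def zconst_def)
qed

lemma eigenvalue_one_iff:
  assumes "msub l M (mid l) = (\<alpha>, \<beta>, \<gamma>, \<delta>)"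
  shows "eigenvalue l M 1 \<longleftrightarrow> (\<forall>n. int l ^ n dvd \<alpha> n * \<delta> n - \<beta> n * \<gamma> n)"
proof -
  obtain p q r s where M: "M = (p, q, r, s)"
    by (cases M)
  have "[\<alpha> n * \<delta> n - \<beta> n * \<gamma> n = (p n - 1) * (s n - 1) - q n * r n] (mod int l ^ n)" for n
    using assms by (intro cong_diff cong_mult)
      (auto simp: M msub_def mid_def zsub_def zconst_def cong_def mod_simps)
  then have "int l ^ n dvd \<alpha> n * \<delta> n - \<beta> n * \<gamma> n
      \<longleftrightarrow> int l ^ n dvd (p n - 1) * (s n - 1) - q n * r n" for n
    using cong_dvd_iff by blast
  then show ?thesis
    by (simp add: eigenvalue_def M)
qed

definition zinv :: "nat \<Rightarrow> int \<Rightarrow> zl" where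
  "zinv l c = (\<lambda>n. modular_inverse (int l ^ n) c)"

lemma zinv_Zl:
  assumes "l > 0" "coprime c (int l)"
  shows "zinv l c \<in> Zl l"
  unfolding Zl_def zinv_def
proof (intro CollectI allI conjI)
  fix n
  have cop: "coprime c (int l ^ k)" for k
    using assms(2) by simp
  show "0 \<le> modular_inverse (int l ^ n) c" "modular_inverse (int l ^ n) c < int l ^ n"
    using assms(1) by (simp_all add: modular_inverse_int_nonneg modular_inverse_int_less)
  have "[c * modular_inverse (int l ^ Suc n) c = 1] (mod int l ^ n)"
    using cong_modular_inverse1[OF cop] by (rule cong_dvd_modulus) simp
  then have "[c * (modular_inverse (int l ^ Suc n) c mod int l ^ n) = 1] (mod int l ^ n)"
    by (simp add: cong_def mod_mult_right_eq)
  then show "modular_inverse (int l ^ n) c = modular_inverse (int l ^ Suc n) c mod int l ^ n"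
    using assms(1) by (intro modular_inverse_int_eqI) simp_all
qed

lemma zmul_zinv: "coprime c (int l) \<Longrightarrow> zmul l (zconst l c) (zinv l c) = zconst l 1"
  using cong_modular_inverse1[of c "int l ^ n" for n]
  by (simp add: zmul_def zconst_def zinv_def fun_eq_iff cong_def mod_mult_left_eq)

lemma smat_mmul_smat: "mmul l (smat l x) (smat l y) = smat l (zmul l x y)"
  unfolding smat_def[of l y] mmul_smat_left by (simp add: smat_def zmul_def zconst_def fun_eq_iff)

lemma smat_GL2:
  assumes "l > 0" "coprime c (int l)"
  shows "smat l (zconst l c) \<in> GL2 l"
proof -
  have mid: "mid l = smat l (zconst l 1)"
    by (simp add: smat_def mid_def)
  have "zmul l (zinv l c) (zconst l c) = zconst l 1"
    using zmul_zinv[OF assms(2)] by (simp add: zmul_def mult.commute)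
  then have "mmul l (smat l (zconst l c)) (smat l (zinv l c)) = mid l"
    "mmul l (smat l (zinv l c)) (smat l (zconst l c)) = mid l"
    using zmul_zinv[OF assms(2)] unfolding mid by (simp_all add: smat_mmul_smat)
  then show ?thesis
    using smat_Mat2 zinv_Zl zconst_Zl assms unfolding GL2_def by blast
qed

lemma cartan_Mat2:
  assumes "l > 0" "cartan l C"
  shows "C \<subseteq> Mat2 l"
proof -
  obtain t n P Pinv where "t \<in> Zl l" "n \<in> Zl l" "P \<in> Mat2 l" "Pinv \<in> Mat2 l"
    and "C \<subseteq> qring_image l t n P Pinv"
    using assms(2) unfolding cartan_def by blast
  then show ?thesis
    using assms(1) unfolding qring_image_def
    by (auto intro!: mmul_Mat2 madd_Mat2 mscal_Mat2 mid_Mat2 companion_Mat2)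
qed

text \<open>Scalar matrices are central, so they normalize every set of matrices.\<close>

lemma smat_normalizer2:
  assumes "l > 0" "coprime c (int l)" "cartan l C"
  shows "smat l (zconst l c) \<in> normalizer2 l C"
proof -
  let ?g = "smat l (zconst l c)"
  have g: "?g \<in> carrier (GL2grp l)"
    using smat_GL2[OF assms(1,2)] by simp
  have "mmul l (mmul l ?g X) (inv\<^bsub>GL2grp l\<^esub> ?g) = X" if "X \<in> C" for X
  proof -
    have X: "X \<in> Mat2 l"
      using cartan_Mat2[OF assms(1,3)] that by blast
    have "mmul l (mmul l ?g X) (inv\<^bsub>GL2grp l\<^esub> ?g) = mmul l X (mmul l ?g (inv\<^bsub>GL2grp l\<^esub> ?g))"
      by (simp add: mmul_smat_commute mmul_assoc)
    also have "\<dots> = X"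
      using group.r_inv[OF group_GL2grp[OF assms(1)] g] mmul_mid_right[OF X] by simp
    finally show ?thesis .
  qed
  then show ?thesis
    unfolding normalizer2_def using smat_GL2[OF assms(1,2)] by force
qed

lemma red_smat_eq_mid:
  assumes "[c = 1] (mod int l ^ k)"
  shows "red (smat l (zconst l c)) k = red (mid l) k"
  using assms by (simp add: red_def smat_def mid_def zconst_def cong_def)

lemma coprime_of_cong_one:
  assumes "prime l" "[c = 1] (mod int l ^ Suc k)"
  shows "coprime c (int l)"
proof -
  have "[c = 1] (mod int l)"
    using cong_dvd_modulus[OF assms(2), of "int l"] by simp
  then show ?thesis
    using coprime_cong_transfer_left[of 1 "int l" c] by (simp add: cong_sym)
qed

lemma scalars_in_open_subgroup:
  assumes l: "prime l" and "mid l \<in> G"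
    and "lopen l G \<or> (\<exists>C. cartan l C \<and> G \<subseteq> normalizer2 l C \<and> lopen_in l (normalizer2 l C) G)"
  obtains k where "\<And>c. [c = 1] (mod int l ^ Suc k) \<Longrightarrow> smat l (zconst l c) \<in> G"
proof -
  have l_pos: "l > 0"
    using l prime_gt_0_nat by blast
  have near_one: "smat l (zconst l c) \<in> V"
    if "[c = 1] (mod int l ^ Suc k)" "{N \<in> Mat2 l. red N k = red (mid l) k} \<subseteq> V" for V k c
  proof -
    have "[c = 1] (mod int l ^ k)"
      using cong_dvd_modulus[OF that(1)] by (simp add: le_imp_power_dvd)
    then show ?thesis
      using that(2) red_smat_eq_mid smat_Mat2[OF l_pos zconst_Zl[OF l_pos]] by blast
  qed
  from assms(3) show ?thesis
  proof
    assume "lopen l G"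
    then obtain k where "{N \<in> Mat2 l. red N k = red (mid l) k} \<subseteq> G"
      using assms(2) unfolding lopen_def by blast
    then show ?thesis
      using that near_one by blast
  next
    assume "\<exists>C. cartan l C \<and> G \<subseteq> normalizer2 l C \<and> lopen_in l (normalizer2 l C) G"
    then obtain C V where C: "cartan l C" and V: "lopen l V" "G = V \<inter> normalizer2 l C"
      unfolding lopen_in_def by blast
    then obtain k where "{N \<in> Mat2 l. red N k = red (mid l) k} \<subseteq> V"
      using assms(2) unfolding lopen_def by blast
    then show ?thesis
      using that near_one V(2) smat_normalizer2[OF l_pos coprime_of_cong_one[OF l] C] by blast
  qed
qed

text \<open>Summing indicators gives \<open>J * prob Z \<le> K\<close> for every \<open>J\<close>.\<close>

lemma (in prob_space) prob_zero_of_bounded_overlap: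
  fixes T :: "nat \<Rightarrow> 'a set"
  assumes Z: "Z \<in> events" and T: "\<And>j. T j \<in> events" "\<And>j. prob (T j) = prob Z"
    and overlap: "\<And>x J. card {j \<in> {..<J}. x \<in> T j} \<le> K"
  shows "prob Z = 0"
proof -
  have bound: "real J * prob Z \<le> real K" for J
  proof -
    have "ennreal (real J * prob Z) = (\<Sum>j<J. emeasure M (T j))"
      using T by (simp add: emeasure_eq_measure ennreal_of_nat_eq_real_of_nat ennreal_mult')
    also have "\<dots> = (\<integral>\<^sup>+ x. (\<Sum>j<J. indicator (T j) x) \<partial>M)"
      using T by (simp add: nn_integral_sum)
    also have "\<dots> \<le> (\<integral>\<^sup>+ x. of_nat K \<partial>M)"
    proof (rule nn_integral_mono)
      fix x
      have "(\<Sum>j<J. indicator (T j) x :: ennreal) = of_nat (card {j \<in> {..<J}. x \<in> T j})"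
        by (simp add: indicator_def Int_def)
      then show "(\<Sum>j<J. indicator (T j) x) \<le> (of_nat K :: ennreal)"
        using overlap[of J x] by simp
    qed
    also have "\<dots> = ennreal (real K)"
      using emeasure_space_1 by (simp add: ennreal_of_nat_eq_real_of_nat)
    finally show ?thesis
      by (simp add: ennreal_le_iff)
  qed
  show ?thesis
  proof (rule ccontr)
    assume "prob Z \<noteq> 0"
    then have pos: "prob Z > 0"
      using measure_nonneg[of M Z] by linarith
    obtain J :: nat where "real K / prob Z < real J"
      using reals_Archimedean2 by blast
    then show False
      using bound[of J] pos by (simp add: field_simps)
  qed
qed

lemma card_le_2_of_no_three:
  assumes "\<And>i j m. i \<in> S \<Longrightarrow> j \<in> S \<Longrightarrow> m \<in> S \<Longrightarrow> i \<noteq> j \<Longrightarrow> i \<noteq> m \<Longrightarrow> j \<noteq> m \<Longrightarrow> False"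
    and "finite S"
  shows "card S \<le> 2"
proof (rule ccontr)
  assume "\<not> card S \<le> 2"
  then have "3 \<le> card S"
    by simp
  then obtain S' where "S' \<subseteq> S" "card S' = 3"
    by (rule obtain_subset_with_card_n)
  then show False
    using assms(1) by (auto simp: card_3_iff)
qed

context haar_group
begin

lemma UN_Mab_sets: "(\<Union>a b. Mab l G a b) \<in> sets \<mu>"
  using Mab_measure(1)[of _ _ "Suc _"] by blast

lemma eigenvalue_one_of_not_in_Mab:
  assumes "M \<in> G - (\<Union>a b. Mab l G a b)"
  shows "eigenvalue l M 1"
proof -
  obtain \<alpha> \<beta> \<gamma> \<delta> where E: "msub l M (mid l) = (\<alpha>, \<beta>, \<gamma>, \<delta>)"
    by (cases "msub l M (mid l)")
  have "M \<in> G" "\<nexists>a b. kergrp l M \<cong> Zmod_pair l a b"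
    using assms by (auto simp: Mab_def)
  then show ?thesis
    using kergrp_iso_of_det_nonzero[OF prime_l _ E] eigenvalue_one_iff[OF E] G_Mat2 by blast
qed

text \<open>Translating by the scalars \<open>t ^ j\<close> of \<open>G\<close> moves the matrices with eigenvalue one to
  matrices with eigenvalue \<open>t ^ j\<close>, and a matrix has at most two eigenvalues.\<close>

lemma measure_not_in_Mab:
  assumes "lopen l G \<or> (\<exists>C. cartan l C \<and> G \<subseteq> normalizer2 l C \<and> lopen_in l (normalizer2 l C) G)"
  shows "measure \<mu> (G - (\<Union>a b. Mab l G a b)) = 0"
proof -
  define Z where "Z = G - (\<Union>a b. Mab l G a b)"
  have Z_sets: "Z \<in> sets \<mu>"
    unfolding Z_def using UN_Mab_sets space_eq by (metis sets.compl_sets)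
  note eig = eigenvalue_one_of_not_in_Mab[folded Z_def]
  obtain k where k: "\<And>c. [c = 1] (mod int l ^ Suc k) \<Longrightarrow> smat l (zconst l c) \<in> G"
    using scalars_in_open_subgroup[OF prime_l mid_in_G assms] by blast
  define t where "t = 1 + int l ^ Suc k"
  have "[t ^ j = 1] (mod int l ^ Suc k)" for j
    using cong_pow[of t 1 "int l ^ Suc k" j] by (simp add: t_def cong_def)
  then have scal: "smat l (zconst l (t ^ j)) \<in> G" for j
    using k by blast
  define T where "T j = mmul l (smat l (zconst l (t ^ j))) ` Z" for j
  have T: "T j \<in> sets \<mu>" "emeasure \<mu> (T j) = emeasure \<mu> Z" for j
    using haar scal Z_sets unfolding haar_prob_def T_def by blast+
  have eig_T: "eigenvalue l X (t ^ j)" if "X \<in> T j" for X j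
    using that eigenvalue_smat_mmul[OF eig, of _ "t ^ j"] by (auto simp: T_def)
  have "t > 1"
    using l_pos by (simp add: t_def)
  have overlap: "card {j \<in> {..<J}. X \<in> T j} \<le> 2" for X J
  proof (rule card_le_2_of_no_three)
    fix i j m
    assume ijm: "i \<in> {j \<in> {..<J}. X \<in> T j}" "j \<in> {j \<in> {..<J}. X \<in> T j}"
      "m \<in> {j \<in> {..<J}. X \<in> T j}" "i \<noteq> j" "i \<noteq> m" "j \<noteq> m"
    then have "t ^ i \<noteq> t ^ j" "t ^ i \<noteq> t ^ m" "t ^ j \<noteq> t ^ m"
      using power_inject_exp[OF \<open>t > 1\<close>] by auto
    then show False
      using at_most_two_eigenvalues[OF prime_ge_2_nat[OF prime_l]] eig_T ijm(1-3) by blast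
  qed simp
  moreover have "measure \<mu> (T j) = measure \<mu> Z" for j
    using T(2) by (simp add: measure_def)
  ultimately have "measure \<mu> Z = 0"
    using prob_zero_of_bounded_overlap[where T = T and K = 2, OF Z_sets T(1)] by blast
  then show ?thesis
    by (simp add: Z_def)
qed

end

theorem lemma12:
  fixes l :: nat and G :: "mat2 set" and \<mu> :: "mat2 measure"
  assumes "prime l"
    and "subgroup G (GL2grp l)"
    and "lopen l G \<or> (\<exists>C. cartan l C \<and> G \<subseteq> normalizer2 l C \<and> lopen_in l (normalizer2 l C) G)"
    and "haar_prob l G \<mu>"
  shows "(\<forall>a b. Mab l G a b \<in> sets \<mu>
            \<and> (\<forall>n. n > a + b \<longrightarrow> measure \<mu> (Mab l G a b) = mu_n l G a b n)
            \<and> (measure \<mu> (Mab l G a b) = 0 \<longleftrightarrow> Mab l G a b = {}))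
       \<and> (\<Union>a b. Mab l G a b) \<in> sets \<mu>
       \<and> measure \<mu> (G - (\<Union>a b. Mab l G a b)) = 0"
proof -
  interpret haar_group l G \<mu>
    using assms(1,2,4) by (rule haar_group.intro)
  have "Mab l G a b \<in> sets \<mu>" for a b
    using Mab_measure(1)[of a b "Suc (a + b)"] by simp
  then show ?thesis
    using Mab_measure(2) measure_Mab_eq_0_iff UN_Mab_sets measure_not_in_Mab[OF assms(3)] by blast
qed

end
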